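(* Let $X$ be as in the context. Then $X$ is positive recurrent if either (a) $v(x)\gtrsim x^c$ for some constant $c\le 2$ and $\limsup_{x\to\infty}J(x)<c-1$, or (b) $v(x)\gtrsim x^c$ for some constant $c>2$ and $\limsup_{x\to\infty}H_1(x)<1$.
   Context: Let $\mathbb S\subseteq\mathbb Z_{\ge0}$ be an infinite set and let $X$ be an irreducible continuous-time Markov chain on $\mathbb S$ whose generator acts on functions $f:\mathbb S\to\mathbb R$ by $\mathcal A f(x)=\sum_{\eta\in\mathbb Z}\lambda_\eta(x)\big(f(x+\eta)-f(x)\big)$, where $\lambda_\eta(x)$ is the rate of the jump $x\to x+\eta$ (and $\lambda_\eta(x)=0$ whenever $x+\eta\notin\mathbb S$). Standing assumption: (a) there is a finite set $\Gamma\subset\mathbb Z$ such that $\lambda_\eta\equiv0$ for $\eta\notin\Gamma$; (b) $0\le\lambda_\eta(x)<\infty$ for all $x,\eta$. Define $m(x)=\sum_{\eta}\eta\,\lambda_\eta(x)$, $v(x)=\frac12\sum_\eta\eta^2\lambda_\eta(x)$ (positive on $\mathbb S$), $J(x)=\dfrac{m(x)x}{v(x)}$, and for $x>1$, $H_1(x)=\dfrac{(\log x)(m(x)x-v(x))}{v(x)}$. Notation: $g\gtrsim h$ means there is $C>0$ with $h(x)\le Cg(x)$ for all sufficiently large $x\in\mathbb S$. *)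

theory Defs
  imports "HOL-Analysis.Analysis"
begin

text \<open>A chain on S (a set of naturals) is given by rates lam eta x of the jump x -> x + eta
  (eta an integer), and a finite set Gamma of possible jumps.\<close>

definition drift :: "int set \<Rightarrow> (int \<Rightarrow> nat \<Rightarrow> real) \<Rightarrow> nat \<Rightarrow> real" where
  "drift \<Gamma> lam x = (\<Sum>\<eta>\<in>\<Gamma>. real_of_int \<eta> * lam \<eta> x)"

definition diffu :: "int set \<Rightarrow> (int \<Rightarrow> nat \<Rightarrow> real) \<Rightarrow> nat \<Rightarrow> real" where
  "diffu \<Gamma> lam x = (1/2) * (\<Sum>\<eta>\<in>\<Gamma>. (real_of_int \<eta>)^2 * lam \<eta> x)"

definition Jfun :: "int set \<Rightarrow> (int \<Rightarrow> nat \<Rightarrow> real) \<Rightarrow> nat \<Rightarrow> real" where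
  "Jfun \<Gamma> lam x = drift \<Gamma> lam x * real x / diffu \<Gamma> lam x"

definition H1fun :: "int set \<Rightarrow> (int \<Rightarrow> nat \<Rightarrow> real) \<Rightarrow> nat \<Rightarrow> real" where
  "H1fun \<Gamma> lam x = ln (real x) * (drift \<Gamma> lam x * real x - diffu \<Gamma> lam x) / diffu \<Gamma> lam x"

definition qrate :: "int set \<Rightarrow> (int \<Rightarrow> nat \<Rightarrow> real) \<Rightarrow> nat \<Rightarrow> real" where
  "qrate \<Gamma> lam x = (\<Sum>\<eta>\<in>\<Gamma> - {0}. lam \<eta> x)"

definition jump_prob :: "int set \<Rightarrow> (int \<Rightarrow> nat \<Rightarrow> real) \<Rightarrow> nat \<Rightarrow> nat \<Rightarrow> real" where
  "jump_prob \<Gamma> lam x y = (if y = x then 0 else lam (int y - int x) x / qrate \<Gamma> lam x)"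

fun path_prob :: "int set \<Rightarrow> (int \<Rightarrow> nat \<Rightarrow> real) \<Rightarrow> nat \<Rightarrow> nat list \<Rightarrow> real" where
  "path_prob \<Gamma> lam x [] = 1"
| "path_prob \<Gamma> lam x (y # ys) = jump_prob \<Gamma> lam x y * path_prob \<Gamma> lam y ys"

text \<open>Expected total holding time (mean holding time in z is 1 / q z) spent in the states
  x, y1, ..., y(k-1) before the jump chain makes the last jump of the path [y1,...,yk].\<close>
fun hold_time :: "int set \<Rightarrow> (int \<Rightarrow> nat \<Rightarrow> real) \<Rightarrow> nat \<Rightarrow> nat list \<Rightarrow> real" where
  "hold_time \<Gamma> lam x [] = 0"
| "hold_time \<Gamma> lam x (y # ys) = 1 / qrate \<Gamma> lam x + hold_time \<Gamma> lam y ys"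

definition return_paths :: "nat set \<Rightarrow> nat \<Rightarrow> nat list set" where
  "return_paths S x = {ys. ys \<noteq> [] \<and> last ys = x \<and> x \<notin> set (butlast ys) \<and> set ys \<subseteq> S}"

text \<open>Positive recurrence of the (minimal) continuous-time chain: every state x is recurrent
  (return probability 1) and has finite mean return time
  E_x[T_x] = E_x[sum of holding times before the first return of the jump chain].\<close>
definition positive_recurrent :: "nat set \<Rightarrow> int set \<Rightarrow> (int \<Rightarrow> nat \<Rightarrow> real) \<Rightarrow> bool" where
  "positive_recurrent S \<Gamma> lam \<longleftrightarrow>
     (\<forall>x\<in>S.
        (\<integral>\<^sup>+ ys. ennreal (path_prob \<Gamma> lam x ys) \<partial>count_space (return_paths S x)) = 1 \<and>
        (\<integral>\<^sup>+ ys. ennreal (path_prob \<Gamma> lam x ys * hold_time \<Gamma> lam x ys)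
            \<partial>count_space (return_paths S x)) < \<infinity>)"

fun pos_path :: "(int \<Rightarrow> nat \<Rightarrow> real) \<Rightarrow> nat \<Rightarrow> nat list \<Rightarrow> bool" where
  "pos_path lam x [] = True"
| "pos_path lam x (y # ys) = (y \<noteq> x \<and> lam (int y - int x) x > 0 \<and> pos_path lam y ys)"

definition irreducible :: "nat set \<Rightarrow> (int \<Rightarrow> nat \<Rightarrow> real) \<Rightarrow> bool" where
  "irreducible S lam \<longleftrightarrow>
     (\<forall>x\<in>S. \<forall>y\<in>S. \<exists>ys. set ys \<subseteq> S \<and> last (x # ys) = y \<and> pos_path lam x ys)"

definition gtrsim :: "nat set \<Rightarrow> (nat \<Rightarrow> real) \<Rightarrow> (nat \<Rightarrow> real) \<Rightarrow> bool" where
  "gtrsim S g h \<longleftrightarrow> (\<exists>C>0. \<forall>\<^sub>F x in inf sequentially (principal S). h x \<le> C * g x)"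

end

theory Submission
  imports Defs
begin

(* The proof works with the embedded jump chain P x y = lam (y - x) x / q x, for which
   sum_y P x y * f y = f x + gen f x / q x with gen the generator of the chain.  Splitting return
   paths to z at their first jump expresses the return probability and the mean return time as
   limits of first-step recursions.  This yields two Foster-Lyapunov criteria: a nonnegative U with
   finite sublevel sets and gen U <= 0 outside a finite set forces recurrence (a maximum principle
   for the chain killed at z), and a nonnegative V with gen V <= -1 outside a finite set bounds the
   mean return time.  The finite exceptional sets are absorbed by a bounded correction that
   decreases geometrically along shortest paths to z.

   Since the jumps are bounded, a third-order Taylor expansion gives
     gen (x powr alpha / alpha) <= x powr (alpha - 2) * v x * (J x + alpha - 1 + O(1 / x)),
     gen (ln (ln x)) <= v x / (x * ln x)^2 * (H_1 x - 1 + O(ln x / x)).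
   Under (a), J x < c - 1 <= 1 eventually, so H_1 x < 0; under (b), H_1 x < 1 forces
   J x < c / 2 < c - 1 eventually.  In both cases ln ln x satisfies the recurrence criterion, and
   x powr alpha / alpha with alpha in (2 - c, 1 - limsup J) satisfies the positive recurrence
   criterion, because x powr (alpha - 2) * v x is bounded below when v x >~ x powr c. *)

section \<open>The embedded jump chain\<close>

locale jump_chain =
  fixes S :: "nat set" and \<Gamma> :: "int set" and lam :: "int \<Rightarrow> nat \<Rightarrow> real"
  assumes Gamma_fin: "finite \<Gamma>"
    and Gamma_supp: "\<forall>x\<in>S. \<forall>\<eta>. \<eta> \<notin> \<Gamma> \<longrightarrow> lam \<eta> x = 0"
    and rates_nonneg: "\<forall>x\<in>S. \<forall>\<eta>. 0 \<le> lam \<eta> x"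
    and rates_in_S: "\<forall>x\<in>S. \<forall>\<eta>. int x + \<eta> \<notin> int ` S \<longrightarrow> lam \<eta> x = 0"
    and v_pos: "\<forall>x\<in>S. diffu \<Gamma> lam x > 0"
    and irred: "irreducible S lam"
begin

abbreviation q :: "nat \<Rightarrow> real" where "q \<equiv> qrate \<Gamma> lam"
abbreviation P :: "nat \<Rightarrow> nat \<Rightarrow> real" where "P \<equiv> jump_prob \<Gamma> lam"

definition targets :: "nat \<Rightarrow> nat set" where
  "targets x = {y \<in> S. y \<noteq> x \<and> int y - int x \<in> \<Gamma>}"

definition jump_size :: nat where
  "jump_size = Max (insert 0 ((\<lambda>\<eta>. nat \<bar>\<eta>\<bar>) ` \<Gamma>))"

lemma abs_le_jump_size: "\<eta> \<in> \<Gamma> \<Longrightarrow> \<bar>\<eta>\<bar> \<le> int jump_size"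
proof -
  assume "\<eta> \<in> \<Gamma>"
  then have "nat \<bar>\<eta>\<bar> \<le> jump_size"
    unfolding jump_size_def using Gamma_fin by (intro Max_ge) auto
  then show ?thesis by linarith
qed

lemma abs_le_jump_size_real: "\<eta> \<in> \<Gamma> \<Longrightarrow> \<bar>real_of_int \<eta>\<bar> \<le> real jump_size"
  using abs_le_jump_size by (metis of_int_abs of_int_le_iff of_int_of_nat_eq)

lemma targets_subset: "targets x \<subseteq> S"
  by (auto simp: targets_def)

lemma finite_targets: "finite (targets x)"
proof -
  have "targets x \<subseteq> (\<lambda>\<eta>. nat (int x + \<eta>)) ` \<Gamma>"
    unfolding targets_def by (force intro: image_eqI[where x = "int y - int x" for y])
  then show ?thesis
    using Gamma_fin finite_surj by blast
qed

lemma qrate_pos: "x \<in> S \<Longrightarrow> 0 < q x"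
proof (rule ccontr)
  assume x: "x \<in> S" and "\<not> 0 < q x"
  have nonneg: "\<forall>\<eta>\<in>\<Gamma> - {0}. 0 \<le> lam \<eta> x"
    using rates_nonneg x by auto
  then have "0 \<le> q x"
    unfolding qrate_def by (intro sum_nonneg) auto
  with \<open>\<not> 0 < q x\<close> have "q x = 0" by simp
  then have "\<forall>\<eta>\<in>\<Gamma> - {0}. lam \<eta> x = 0"
    unfolding qrate_def using sum_nonneg_eq_0_iff[of "\<Gamma> - {0}" "\<lambda>\<eta>. lam \<eta> x"] nonneg Gamma_fin
    by simp
  then have "(\<Sum>\<eta>\<in>\<Gamma>. (real_of_int \<eta>)\<^sup>2 * lam \<eta> x) = 0"
    by (intro sum.neutral) auto
  with v_pos x show False
    unfolding diffu_def by auto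
qed

lemma jump_prob_nonneg: "x \<in> S \<Longrightarrow> 0 \<le> P x y"
  using qrate_pos[of x] rates_nonneg by (auto simp: jump_prob_def)

lemma jump_prob_eq_0:
  assumes "x \<in> S" "y \<notin> targets x"
  shows "P x y = 0"
proof (cases "y = x \<or> y \<notin> S")
  case False
  with assms have "int y - int x \<notin> \<Gamma>" by (auto simp: targets_def)
  with assms False Gamma_supp show ?thesis by (auto simp: jump_prob_def)
next
  case True
  moreover have "y \<notin> S \<Longrightarrow> int x + (int y - int x) \<notin> int ` S" by auto
  ultimately show ?thesis
    using rates_in_S assms(1) by (auto simp: jump_prob_def)
qed

lemma positive_rate_target:
  assumes "x \<in> S" "y \<in> S" "y \<noteq> x" "0 < lam (int y - int x) x"
  shows "y \<in> targets x" and "0 < P x y"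
proof -
  have "int y - int x \<in> \<Gamma>"
    using Gamma_supp assms(1,4) by (auto intro: ccontr)
  with assms show "y \<in> targets x" by (simp add: targets_def)
  show "0 < P x y"
    using assms qrate_pos[of x] by (simp add: jump_prob_def)
qed

text \<open>The truncation by nat is harmless: lam \<eta> x = 0 whenever x + \<eta> lies outside S.\<close>
definition gen :: "(nat \<Rightarrow> real) \<Rightarrow> nat \<Rightarrow> real" where
  "gen f x = (\<Sum>\<eta>\<in>\<Gamma>. lam \<eta> x * (f (nat (int x + \<eta>)) - f x))"

lemma gen_cmult: "gen (\<lambda>y. c * f y) x = c * gen f x"
  unfolding gen_def by (simp add: sum_distrib_left algebra_simps)

lemma targets_eq_image:
  "targets x = (\<lambda>\<eta>. nat (int x + \<eta>)) ` {\<eta>\<in>\<Gamma>. \<eta> \<noteq> 0 \<and> int x + \<eta> \<in> int ` S}"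
proof
  show "targets x \<subseteq> (\<lambda>\<eta>. nat (int x + \<eta>)) ` {\<eta>\<in>\<Gamma>. \<eta> \<noteq> 0 \<and> int x + \<eta> \<in> int ` S}"
    unfolding targets_def by (force intro: image_eqI[where x = "int y - int x" for y])
next
  show "(\<lambda>\<eta>. nat (int x + \<eta>)) ` {\<eta>\<in>\<Gamma>. \<eta> \<noteq> 0 \<and> int x + \<eta> \<in> int ` S} \<subseteq> targets x"
  proof
    fix y assume "y \<in> (\<lambda>\<eta>. nat (int x + \<eta>)) ` {\<eta>\<in>\<Gamma>. \<eta> \<noteq> 0 \<and> int x + \<eta> \<in> int ` S}"
    then obtain \<eta> w where \<eta>: "\<eta> \<in> \<Gamma>" "\<eta> \<noteq> 0" "w \<in> S" "int x + \<eta> = int w" "y = nat (int x + \<eta>)"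
      by blast
    then have "y = w" "int y - int x = \<eta>" by auto
    with \<eta>(1-3) show "y \<in> targets x"
      unfolding targets_def by auto
  qed
qed

lemma sum_jump_prob_mult:
  assumes x: "x \<in> S"
  shows "(\<Sum>y\<in>targets x. P x y * f y) = f x + gen f x / q x"
proof -
  define E where "E = {\<eta>\<in>\<Gamma>. \<eta> \<noteq> 0 \<and> int x + \<eta> \<in> int ` S}"
  have inj: "inj_on (\<lambda>\<eta>. nat (int x + \<eta>)) E"
    unfolding E_def by (rule inj_onI) auto
  note targets_eq = targets_eq_image[of x, folded E_def]
  have "(\<Sum>y\<in>targets x. P x y * f y) = (\<Sum>\<eta>\<in>E. P x (nat (int x + \<eta>)) * f (nat (int x + \<eta>)))"
    unfolding targets_eq by (rule sum.reindex[OF inj, unfolded comp_def])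
  also have "\<dots> = (\<Sum>\<eta>\<in>E. lam \<eta> x * f (nat (int x + \<eta>))) / q x"
    unfolding sum_divide_distrib
  proof (rule sum.cong[OF refl])
    fix \<eta> assume "\<eta> \<in> E"
    then have "nat (int x + \<eta>) \<noteq> x" "int (nat (int x + \<eta>)) - int x = \<eta>"
      unfolding E_def by auto
    then show "P x (nat (int x + \<eta>)) * f (nat (int x + \<eta>)) = lam \<eta> x * f (nat (int x + \<eta>)) / q x"
      by (simp add: jump_prob_def)
  qed
  also have "(\<Sum>\<eta>\<in>E. lam \<eta> x * f (nat (int x + \<eta>))) = (\<Sum>\<eta>\<in>\<Gamma> - {0}. lam \<eta> x * f (nat (int x + \<eta>)))"
    by (rule sum.mono_neutral_left) (use Gamma_fin rates_in_S x in \<open>auto simp: E_def\<close>)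
  finally have lhs: "(\<Sum>y\<in>targets x. P x y * f y) = (\<Sum>\<eta>\<in>\<Gamma> - {0}. lam \<eta> x * f (nat (int x + \<eta>))) / q x" .
  have "gen f x = (\<Sum>\<eta>\<in>\<Gamma> - {0}. lam \<eta> x * (f (nat (int x + \<eta>)) - f x))"
    unfolding gen_def by (rule sum.mono_neutral_right) (use Gamma_fin in auto)
  then have gen_eq: "gen f x = (\<Sum>\<eta>\<in>\<Gamma> - {0}. lam \<eta> x * f (nat (int x + \<eta>))) - q x * f x"
    by (simp add: qrate_def algebra_simps sum_subtractf sum_distrib_left)
  show ?thesis
    unfolding lhs gen_eq using qrate_pos[OF x] by (simp add: field_simps)
qed

lemma sum_jump_prob: "x \<in> S \<Longrightarrow> (\<Sum>y\<in>targets x. P x y) = 1"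
  using sum_jump_prob_mult[of x "\<lambda>_. 1"] by (simp add: gen_def)

lemma jump_prob_plus_sum_others:
  assumes "x \<in> S" "z \<in> S"
  shows "P x z + (\<Sum>y\<in>targets x - {z}. P x y) = 1"
proof (cases "z \<in> targets x")
  case True
  then show ?thesis
    using sum_jump_prob[OF assms(1)] sum.remove[OF finite_targets True, of "P x"] by simp
next
  case False
  then show ?thesis
    using sum_jump_prob[OF assms(1)] jump_prob_eq_0[OF assms(1) False] by simp
qed

lemma sum_jump_prob_mult_le:
  assumes x: "x \<in> S" and y0: "y0 \<in> targets x" and W_le: "\<And>y. W y \<le> C"
  shows "(\<Sum>y\<in>targets x. P x y * W y) \<le> C - P x y0 * (C - W y0)"
proof -
  have "(\<Sum>y\<in>targets x. P x y * W y) = P x y0 * W y0 + (\<Sum>y\<in>targets x - {y0}. P x y * W y)"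
    by (rule sum.remove[OF finite_targets y0])
  also have "\<dots> \<le> P x y0 * W y0 + (\<Sum>y\<in>targets x - {y0}. P x y * C)"
    using x by (intro add_left_mono sum_mono mult_left_mono W_le jump_prob_nonneg)
  also have "(\<Sum>y\<in>targets x - {y0}. P x y * C) = (1 - P x y0) * C"
    using sum.remove[OF finite_targets y0, of "P x"] sum_jump_prob[OF x]
    by (simp add: sum_distrib_right[symmetric])
  finally show ?thesis
    by (simp add: algebra_simps)
qed

lemma path_prob_nonneg: "x \<in> S \<Longrightarrow> set ys \<subseteq> S \<Longrightarrow> 0 \<le> path_prob \<Gamma> lam x ys"
  by (induction ys arbitrary: x) (auto intro!: mult_nonneg_nonneg jump_prob_nonneg)

lemma hold_time_nonneg: "x \<in> S \<Longrightarrow> set ys \<subseteq> S \<Longrightarrow> 0 \<le> hold_time \<Gamma> lam x ys"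
  by (induction ys arbitrary: x) (auto intro!: add_nonneg_nonneg less_imp_le[OF qrate_pos])

end

section \<open>First-step analysis of return paths\<close>

lemma ennreal_mult_add_mult:
  fixes a b c d :: real
  assumes "0 \<le> a" "0 \<le> b" "0 \<le> c" "0 \<le> d"
  shows "ennreal (a * b + c * d) = ennreal a * ennreal b + ennreal c * ennreal d"
  using assms by (simp add: ennreal_plus ennreal_mult)

lemma ennreal_plus_sum:
  fixes a :: real
  assumes "0 \<le> a" "\<And>i. i \<in> I \<Longrightarrow> 0 \<le> f i"
  shows "ennreal a + (\<Sum>i\<in>I. ennreal (f i)) = ennreal (a + sum f I)"
  using assms by (simp add: sum_ennreal sum_nonneg ennreal_plus)

lemma nn_integral_Cons_image:
  fixes F :: "'a list \<Rightarrow> ennreal"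
  shows "(\<integral>\<^sup>+ys. F ys * indicator (Cons y ` R) ys \<partial>count_space UNIV)
    = (\<integral>\<^sup>+ys. F (y # ys) \<partial>count_space R)"
proof -
  have "(\<integral>\<^sup>+ys. F ys * indicator (Cons y ` R) ys \<partial>count_space UNIV)
      = (\<integral>\<^sup>+ys. F ys \<partial>count_space (Cons y ` R))"
    by (simp add: nn_integral_count_space_indicator)
  also have "\<dots> = (\<integral>\<^sup>+ys. F (y # ys) \<partial>count_space R)"
    by (rule nn_integral_bij_count_space[symmetric]) (auto simp: bij_betw_def inj_on_def)
  finally show ?thesis .
qed

context jump_chain
begin

definition return_paths_upto :: "nat \<Rightarrow> nat \<Rightarrow> nat list set" where
  "return_paths_upto z n = {ys \<in> return_paths S z. length ys \<le> n}"

lemma return_paths_upto_0: "return_paths_upto z 0 = {}"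
  by (auto simp: return_paths_upto_def return_paths_def)

lemma return_paths_upto_subset: "ys \<in> return_paths_upto z n \<Longrightarrow> set ys \<subseteq> S"
  by (auto simp: return_paths_upto_def return_paths_def)

lemma singleton_in_return_paths_upto: "z \<in> S \<Longrightarrow> [z] \<in> return_paths_upto z (Suc n)"
  by (auto simp: return_paths_upto_def return_paths_def)

lemma Cons_in_return_paths_upto:
  "y \<in> S \<Longrightarrow> y \<noteq> z \<Longrightarrow> ys \<in> return_paths_upto z n \<Longrightarrow> y # ys \<in> return_paths_upto z (Suc n)"
  by (auto simp: return_paths_upto_def return_paths_def)

lemma return_paths_upto_SucE:
  assumes "ys \<in> return_paths_upto z (Suc n)"
  obtains "ys = [z]"
  | y ys' where "ys = y # ys'" "y \<in> S" "y \<noteq> z" "ys' \<in> return_paths_upto z n"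
proof (cases ys)
  case Nil
  with assms show ?thesis by (simp add: return_paths_upto_def return_paths_def)
next
  case (Cons y ys')
  with assms that show ?thesis
    by (cases "ys' = []") (auto simp: return_paths_upto_def return_paths_def)
qed

lemma indicator_return_paths_upto_Suc:
  fixes F :: "nat list \<Rightarrow> ennreal"
  assumes z: "z \<in> S" and A: "finite A" "A \<subseteq> S - {z}"
    and F_zero: "\<And>y ys. y \<in> S - {z} - A \<Longrightarrow> F (y # ys) = 0"
  shows "F ys * indicator (return_paths_upto z (Suc n)) ys
    = F ys * indicator {[z]} ys + (\<Sum>y\<in>A. F ys * indicator (Cons y ` return_paths_upto z n) ys)"
proof (cases "ys \<in> return_paths_upto z (Suc n)")
  case True
  then show ?thesis
  proof (cases rule: return_paths_upto_SucE)
    case 1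
    moreover have "[z] \<notin> Cons y ` return_paths_upto z n" for y
      by (auto simp: return_paths_upto_def return_paths_def)
    ultimately show ?thesis
      using True by simp
  next
    case (2 y ys')
    have "(\<Sum>y'\<in>A. F ys * indicator (Cons y' ` return_paths_upto z n) ys) = (\<Sum>y'\<in>A. if y' = y then F ys else 0)"
      by (rule sum.cong) (use 2 in \<open>auto simp: indicator_def\<close>)
    also have "\<dots> = (if y \<in> A then F ys else 0)"
      using A(1) by (simp add: sum.delta')
    finally show ?thesis
      using True 2 F_zero[of y ys'] by (auto simp: indicator_def)
  qed
next
  case False
  then have "ys \<notin> Cons y ` return_paths_upto z n" if "y \<in> A" for y
    using Cons_in_return_paths_upto[of y z _ n] that A(2) by auto
  moreover have "ys \<noteq> [z]"
    using False singleton_in_return_paths_upto[OF z] by auto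
  ultimately show ?thesis
    using False by (simp add: indicator_def)
qed

lemma nn_integral_return_paths_upto_Suc:
  fixes F :: "nat list \<Rightarrow> ennreal"
  assumes z: "z \<in> S" and A: "finite A" "A \<subseteq> S - {z}"
    and F_zero: "\<And>y ys. y \<in> S - {z} - A \<Longrightarrow> F (y # ys) = 0"
  shows "(\<integral>\<^sup>+ys. F ys \<partial>count_space (return_paths_upto z (Suc n)))
       = F [z] + (\<Sum>y\<in>A. \<integral>\<^sup>+ys. F (y # ys) \<partial>count_space (return_paths_upto z n))"
proof -
  have split: "F ys * indicator (return_paths_upto z (Suc n)) ys
      = F ys * indicator {[z]} ys + (\<Sum>y\<in>A. F ys * indicator (Cons y ` return_paths_upto z n) ys)" for ys
    using z A F_zero by (rule indicator_return_paths_upto_Suc)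
  have "(\<integral>\<^sup>+ys. F ys \<partial>count_space (return_paths_upto z (Suc n)))
      = (\<integral>\<^sup>+ys. F ys * indicator (return_paths_upto z (Suc n)) ys \<partial>count_space UNIV)"
    by (simp add: nn_integral_count_space_indicator)
  also have "\<dots> = (\<integral>\<^sup>+ys. F ys * indicator {[z]} ys \<partial>count_space UNIV)
        + (\<Sum>y\<in>A. \<integral>\<^sup>+ys. F ys * indicator (Cons y ` return_paths_upto z n) ys \<partial>count_space UNIV)"
    unfolding split by (simp add: nn_integral_add nn_integral_sum)
  also have "\<dots> = F [z] + (\<Sum>y\<in>A. \<integral>\<^sup>+ys. F (y # ys) \<partial>count_space (return_paths_upto z n))"
    unfolding nn_integral_Cons_image by (simp add: nn_integral_indicator_singleton)
  finally show ?thesis .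
qed

lemma nn_integral_return_paths_SUP:
  fixes F :: "nat list \<Rightarrow> ennreal"
  shows "(\<integral>\<^sup>+ys. F ys \<partial>count_space (return_paths S z))
       = (SUP n. \<integral>\<^sup>+ys. F ys \<partial>count_space (return_paths_upto z n))"
proof -
  have pointwise: "F ys * indicator (return_paths S z) ys = (SUP n. F ys * indicator (return_paths_upto z n) ys)"
    for ys
  proof (cases "ys \<in> return_paths S z")
    case True
    then have "ys \<in> return_paths_upto z (length ys)"
      by (simp add: return_paths_upto_def)
    then have "F ys \<le> (SUP n. F ys * indicator (return_paths_upto z n) ys)"
      by (intro SUP_upper2[of "length ys"]) auto
    moreover have "(SUP n. F ys * indicator (return_paths_upto z n) ys) \<le> F ys"
      by (rule SUP_least) (simp add: indicator_def)
    ultimately show ?thesis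
      using True by simp
  next
    case False
    then show ?thesis by (simp add: return_paths_upto_def)
  qed
  have "incseq (\<lambda>n ys. F ys * indicator (return_paths_upto z n) ys)"
    by (intro incseq_SucI le_funI) (auto simp: indicator_def return_paths_upto_def)
  then have "(\<integral>\<^sup>+ys. (SUP n. F ys * indicator (return_paths_upto z n) ys) \<partial>count_space UNIV)
      = (SUP n. \<integral>\<^sup>+ys. F ys * indicator (return_paths_upto z n) ys \<partial>count_space UNIV)"
    by (rule nn_integral_monotone_convergence_SUP) simp
  then show ?thesis
    by (simp add: nn_integral_count_space_indicator pointwise[symmetric])
qed

fun hit_prob_upto :: "nat \<Rightarrow> nat \<Rightarrow> nat \<Rightarrow> real" where
  "hit_prob_upto z 0 x = 0"
| "hit_prob_upto z (Suc n) x = P x z + (\<Sum>y\<in>targets x - {z}. P x y * hit_prob_upto z n y)"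

fun hit_time_upto :: "nat \<Rightarrow> nat \<Rightarrow> nat \<Rightarrow> real" where
  "hit_time_upto z 0 x = 0"
| "hit_time_upto z (Suc n) x = P x z / q x
     + (\<Sum>y\<in>targets x - {z}. P x y / q x * hit_prob_upto z n y + P x y * hit_time_upto z n y)"

lemma hit_prob_upto_nonneg: "x \<in> S \<Longrightarrow> 0 \<le> hit_prob_upto z n x"
proof (induction n arbitrary: x)
  case (Suc n)
  then show ?case
    using targets_subset by (auto intro!: add_nonneg_nonneg sum_nonneg mult_nonneg_nonneg jump_prob_nonneg)
qed simp

lemma hit_time_upto_nonneg: "x \<in> S \<Longrightarrow> 0 \<le> hit_time_upto z n x"
proof (induction n arbitrary: x)
  case (Suc n)
  then show ?case
    using targets_subset qrate_pos[OF Suc.prems]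
    by (auto intro!: add_nonneg_nonneg sum_nonneg mult_nonneg_nonneg jump_prob_nonneg
        hit_prob_upto_nonneg divide_nonneg_pos)
qed simp

lemma nn_integral_path_prob_upto:
  assumes z: "z \<in> S"
  shows "x \<in> S \<Longrightarrow> (\<integral>\<^sup>+ys. ennreal (path_prob \<Gamma> lam x ys) \<partial>count_space (return_paths_upto z n))
    = ennreal (hit_prob_upto z n x)"
proof (induction n arbitrary: x)
  case 0
  then show ?case by (simp add: return_paths_upto_0 nn_integral_count_space_finite)
next
  case (Suc n)
  have P_nonneg: "0 \<le> P x y" for y
    using jump_prob_nonneg[OF Suc.prems] .
  have "(\<integral>\<^sup>+ys. ennreal (path_prob \<Gamma> lam x ys) \<partial>count_space (return_paths_upto z (Suc n)))
     = ennreal (P x z) + (\<Sum>y\<in>targets x - {z}. \<integral>\<^sup>+ys. ennreal (path_prob \<Gamma> lam x (y # ys))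
         \<partial>count_space (return_paths_upto z n))"
    by (subst nn_integral_return_paths_upto_Suc[OF z])
      (use finite_targets targets_subset jump_prob_eq_0[OF Suc.prems] in auto)
  also have "\<dots> = ennreal (P x z) + (\<Sum>y\<in>targets x - {z}. ennreal (P x y * hit_prob_upto z n y))"
  proof (intro arg_cong2[where f = "(+)"] refl sum.cong)
    fix y assume y: "y \<in> targets x - {z}"
    then have "y \<in> S" using targets_subset by auto
    then show "(\<integral>\<^sup>+ys. ennreal (path_prob \<Gamma> lam x (y # ys)) \<partial>count_space (return_paths_upto z n))
        = ennreal (P x y * hit_prob_upto z n y)"
      by (simp add: ennreal_mult' P_nonneg nn_integral_cmult Suc.IH)
  qed
  also have "\<dots> = ennreal (hit_prob_upto z (Suc n) x)"
    using targets_subset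
    by (simp only: hit_prob_upto.simps, intro ennreal_plus_sum P_nonneg)
      (auto intro!: mult_nonneg_nonneg P_nonneg hit_prob_upto_nonneg)
  finally show ?case .
qed

lemma nn_integral_path_time_Cons:
  assumes x: "x \<in> S" and y: "y \<in> S"
  shows "(\<integral>\<^sup>+ys. ennreal (path_prob \<Gamma> lam x (y # ys) * hold_time \<Gamma> lam x (y # ys))
      \<partial>count_space (return_paths_upto z n))
    = ennreal (P x y / q x) * (\<integral>\<^sup>+ys. ennreal (path_prob \<Gamma> lam y ys) \<partial>count_space (return_paths_upto z n))
      + ennreal (P x y) * (\<integral>\<^sup>+ys. ennreal (path_prob \<Gamma> lam y ys * hold_time \<Gamma> lam y ys)
          \<partial>count_space (return_paths_upto z n))"
proof -
  have P: "0 \<le> P x y" "0 \<le> P x y / q x"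
    using jump_prob_nonneg[OF x] qrate_pos[OF x] by auto
  have "(\<integral>\<^sup>+ys. ennreal (path_prob \<Gamma> lam x (y # ys) * hold_time \<Gamma> lam x (y # ys))
      \<partial>count_space (return_paths_upto z n))
    = (\<integral>\<^sup>+ys. ennreal (P x y / q x) * ennreal (path_prob \<Gamma> lam y ys)
        + ennreal (P x y) * ennreal (path_prob \<Gamma> lam y ys * hold_time \<Gamma> lam y ys)
      \<partial>count_space (return_paths_upto z n))"
  proof (rule nn_integral_cong)
    fix ys assume "ys \<in> space (count_space (return_paths_upto z n))"
    then have ys: "set ys \<subseteq> S"
      using return_paths_upto_subset by simp
    have "path_prob \<Gamma> lam x (y # ys) * hold_time \<Gamma> lam x (y # ys)
        = P x y / q x * path_prob \<Gamma> lam y ys + P x y * (path_prob \<Gamma> lam y ys * hold_time \<Gamma> lam y ys)"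
      by (simp add: algebra_simps)
    then show "ennreal (path_prob \<Gamma> lam x (y # ys) * hold_time \<Gamma> lam x (y # ys))
        = ennreal (P x y / q x) * ennreal (path_prob \<Gamma> lam y ys)
          + ennreal (P x y) * ennreal (path_prob \<Gamma> lam y ys * hold_time \<Gamma> lam y ys)"
      using path_prob_nonneg[OF y ys] hold_time_nonneg[OF y ys]
      by (simp only:) (intro ennreal_mult_add_mult P mult_nonneg_nonneg)
  qed
  then show ?thesis
    by (simp add: nn_integral_add nn_integral_cmult)
qed

lemma nn_integral_path_time_upto:
  assumes z: "z \<in> S"
  shows "x \<in> S \<Longrightarrow> (\<integral>\<^sup>+ys. ennreal (path_prob \<Gamma> lam x ys * hold_time \<Gamma> lam x ys)
      \<partial>count_space (return_paths_upto z n)) = ennreal (hit_time_upto z n x)"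
proof (induction n arbitrary: x)
  case 0
  then show ?case by (simp add: return_paths_upto_0 nn_integral_count_space_finite)
next
  case (Suc n)
  let ?T = "\<lambda>x ys. path_prob \<Gamma> lam x ys * hold_time \<Gamma> lam x ys"
  have P_nonneg: "0 \<le> P x y" and Pq_nonneg: "0 \<le> P x y / q x" for y
    using jump_prob_nonneg[OF Suc.prems] qrate_pos[OF Suc.prems] by auto
  have "(\<integral>\<^sup>+ys. ennreal (?T x ys) \<partial>count_space (return_paths_upto z (Suc n)))
     = ennreal (P x z / q x) + (\<Sum>y\<in>targets x - {z}. \<integral>\<^sup>+ys. ennreal (?T x (y # ys))
         \<partial>count_space (return_paths_upto z n))"
    by (subst nn_integral_return_paths_upto_Suc[OF z])
      (use finite_targets targets_subset jump_prob_eq_0[OF Suc.prems] in auto)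
  also have "\<dots> = ennreal (P x z / q x)
      + (\<Sum>y\<in>targets x - {z}. ennreal (P x y / q x * hit_prob_upto z n y + P x y * hit_time_upto z n y))"
  proof (intro arg_cong2[where f = "(+)"] refl sum.cong)
    fix y assume "y \<in> targets x - {z}"
    then have y: "y \<in> S" using targets_subset by auto
    show "(\<integral>\<^sup>+ys. ennreal (?T x (y # ys)) \<partial>count_space (return_paths_upto z n))
        = ennreal (P x y / q x * hit_prob_upto z n y + P x y * hit_time_upto z n y)"
      unfolding nn_integral_path_time_Cons[OF Suc.prems y] nn_integral_path_prob_upto[OF z y] Suc.IH[OF y]
      by (intro ennreal_mult_add_mult[symmetric] P_nonneg Pq_nonneg hit_prob_upto_nonneg[OF y]
          hit_time_upto_nonneg[OF y])
  qed
  also have "\<dots> = ennreal (hit_time_upto z (Suc n) x)"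
  proof -
    have "0 \<le> P x y / q x * hit_prob_upto z n y + P x y * hit_time_upto z n y"
      if "y \<in> targets x - {z}" for y
      using that targets_subset
      by (intro add_nonneg_nonneg mult_nonneg_nonneg Pq_nonneg P_nonneg hit_prob_upto_nonneg
          hit_time_upto_nonneg) auto
    then show ?thesis
      by (simp only: hit_time_upto.simps) (intro ennreal_plus_sum Pq_nonneg)
  qed
  finally show ?case .
qed

lemma hit_prob_upto_le_1: "z \<in> S \<Longrightarrow> x \<in> S \<Longrightarrow> hit_prob_upto z n x \<le> 1"
proof (induction n arbitrary: x)
  case (Suc n)
  have "(\<Sum>y\<in>targets x - {z}. P x y * hit_prob_upto z n y) \<le> (\<Sum>y\<in>targets x - {z}. P x y)"
    using Suc targets_subset by (intro sum_mono mult_left_le jump_prob_nonneg) auto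
  then show ?case
    using jump_prob_plus_sum_others[OF Suc.prems(2,1)] by simp
qed simp

lemma hit_prob_upto_le_Suc: "x \<in> S \<Longrightarrow> hit_prob_upto z n x \<le> hit_prob_upto z (Suc n) x"
proof (induction n arbitrary: x)
  case 0
  then show ?case using hit_prob_upto_nonneg[OF 0, of z 1] by simp
next
  case (Suc n)
  have "(\<Sum>y\<in>targets x - {z}. P x y * hit_prob_upto z n y) \<le> (\<Sum>y\<in>targets x - {z}. P x y * hit_prob_upto z (Suc n) y)"
    using Suc targets_subset by (intro sum_mono mult_left_mono jump_prob_nonneg) auto
  then show ?case by simp
qed

definition hit_prob :: "nat \<Rightarrow> nat \<Rightarrow> real" where
  "hit_prob z x = (SUP n. hit_prob_upto z n x)"

lemma hit_prob_upto_tendsto: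
  assumes "z \<in> S" "x \<in> S"
  shows "(\<lambda>n. hit_prob_upto z n x) \<longlonglongrightarrow> hit_prob z x"
  unfolding hit_prob_def
  by (rule LIMSEQ_incseq_SUP)
    (use hit_prob_upto_le_1[OF assms] hit_prob_upto_le_Suc[OF assms(2)] in \<open>auto simp: incseq_SucI bdd_above_def\<close>)

lemma hit_prob_nonneg: "z \<in> S \<Longrightarrow> x \<in> S \<Longrightarrow> 0 \<le> hit_prob z x"
  by (rule LIMSEQ_le_const[OF hit_prob_upto_tendsto]) (auto intro: hit_prob_upto_nonneg)

lemma hit_prob_le_1: "z \<in> S \<Longrightarrow> x \<in> S \<Longrightarrow> hit_prob z x \<le> 1"
  by (rule LIMSEQ_le_const2[OF hit_prob_upto_tendsto]) (auto intro: hit_prob_upto_le_1)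

lemma hit_prob_first_step:
  assumes z: "z \<in> S" and x: "x \<in> S"
  shows "hit_prob z x = P x z + (\<Sum>y\<in>targets x - {z}. P x y * hit_prob z y)"
proof (rule LIMSEQ_unique)
  show "(\<lambda>n. hit_prob_upto z (Suc n) x) \<longlonglongrightarrow> hit_prob z x"
    using hit_prob_upto_tendsto[OF z x] by (rule LIMSEQ_Suc)
  show "(\<lambda>n. hit_prob_upto z (Suc n) x) \<longlonglongrightarrow> P x z + (\<Sum>y\<in>targets x - {z}. P x y * hit_prob z y)"
    unfolding hit_prob_upto.simps using targets_subset
    by (intro tendsto_add tendsto_const tendsto_sum tendsto_mult hit_prob_upto_tendsto z) auto
qed

lemma nn_integral_return_prob:
  assumes z: "z \<in> S" and x: "x \<in> S"
  shows "(\<integral>\<^sup>+ys. ennreal (path_prob \<Gamma> lam x ys) \<partial>count_space (return_paths S z)) = ennreal (hit_prob z x)"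
proof -
  have "(\<integral>\<^sup>+ys. ennreal (path_prob \<Gamma> lam x ys) \<partial>count_space (return_paths S z))
      = (SUP n. ennreal (hit_prob_upto z n x))"
    by (simp only: nn_integral_return_paths_SUP nn_integral_path_prob_upto[OF z x])
  also have "\<dots> = ennreal (hit_prob z x)"
  proof (rule LIMSEQ_unique)
    show "(\<lambda>n. ennreal (hit_prob_upto z n x)) \<longlonglongrightarrow> (SUP n. ennreal (hit_prob_upto z n x))"
      by (intro LIMSEQ_SUP incseq_SucI ennreal_leI hit_prob_upto_le_Suc x)
    show "(\<lambda>n. ennreal (hit_prob_upto z n x)) \<longlonglongrightarrow> ennreal (hit_prob z x)"
      by (rule tendsto_ennrealI[OF hit_prob_upto_tendsto[OF z x]])
  qed
  finally show ?thesis .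
qed

end

section \<open>Lyapunov criteria for recurrence and positive recurrence\<close>

lemma finite_uniform_positive_choice:
  fixes h :: "'a \<Rightarrow> 'b \<Rightarrow> real"
  assumes "finite A" "\<forall>x\<in>A. \<exists>y. Q x y \<and> 0 < h x y"
  shows "\<exists>p>0. \<forall>x\<in>A. \<exists>y. Q x y \<and> p \<le> h x y"
  using assms
proof (induction A rule: finite_induct)
  case empty
  then show ?case by (auto intro: exI[of _ 1])
next
  case (insert a A)
  then obtain p where p: "p > 0" "\<forall>x\<in>A. \<exists>y. Q x y \<and> p \<le> h x y" by auto
  obtain y where y: "Q a y" "0 < h a y" using insert.prems by auto
  show ?case
    by (rule exI[of _ "min p (h a y)"]) (use p y in \<open>auto intro: order_trans[OF min.cobounded1]\<close>)
qed

lemma obtain_max_if_finite_superlevel: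
  fixes f :: "'a \<Rightarrow> 'b :: linorder"
  assumes fin: "finite {y \<in> A. f x \<le> f y}" and x: "x \<in> A"
  obtains w where "w \<in> A" "f x \<le> f w" "\<And>y. y \<in> A \<Longrightarrow> f y \<le> f w"
proof -
  let ?B = "{y \<in> A. f x \<le> f y}"
  have "Max (f ` ?B) \<in> f ` ?B"
    using fin x by (intro Max_in) auto
  then obtain w where w: "Max (f ` ?B) = f w" "w \<in> ?B"
    by (rule imageE)
  have B_le: "f y \<le> f w" if "y \<in> ?B" for y
    using Max_ge[OF finite_imageI[OF fin] imageI[OF that, of f]] unfolding w(1) .
  have max: "f y \<le> f w" if "y \<in> A" for y
  proof (cases "f x \<le> f y")
    case False
    with B_le[of x] x show ?thesis
      by simp
  qed (use B_le that in simp)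
  show ?thesis
    using w(2) max by (intro that[of w]) auto
qed

lemma finite_if_eventually_in:
  fixes S :: "nat set"
  assumes "eventually Q (inf sequentially (principal S))"
  shows "finite {x \<in> S. \<not> Q x}"
proof -
  obtain N where "\<forall>x\<ge>N. x \<in> S \<longrightarrow> Q x"
    using assms unfolding eventually_inf_principal eventually_sequentially by blast
  then have "{x \<in> S. \<not> Q x} \<subseteq> {..<N}"
    by (auto simp: not_less[symmetric])
  then show ?thesis
    using finite_subset by blast
qed

context jump_chain
begin

text \<open>Sums over targets x - {z} are one-step means for the chain killed at z.\<close>
lemma subharmonic_max_step:
  assumes z: "z \<in> S" and w: "w \<in> S"
    and sub: "f w \<le> (\<Sum>y\<in>targets w - {z}. P w y * f y)"
    and max: "\<And>y. y \<in> S - {z} \<Longrightarrow> f y \<le> f w" and pos: "0 < f w"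
  shows "P w z = 0" and "\<And>y. y \<in> targets w - {z} \<Longrightarrow> 0 < P w y \<Longrightarrow> f y = f w"
proof -
  have le: "P w y * f y \<le> P w y * f w" if "y \<in> targets w - {z}" for y
    using that targets_subset by (intro mult_left_mono max jump_prob_nonneg w) auto
  note sub
  also have "(\<Sum>y\<in>targets w - {z}. P w y * f y) \<le> (\<Sum>y\<in>targets w - {z}. P w y * f w)"
    by (rule sum_mono) (rule le)
  also have "\<dots> = (1 - P w z) * f w"
    using jump_prob_plus_sum_others[OF w z] by (simp add: sum_distrib_right[symmetric])
  finally have "P w z * f w \<le> 0"
    by (simp add: algebra_simps)
  with pos jump_prob_nonneg[OF w, of z] show Pz: "P w z = 0"
    by (simp add: mult_le_0_iff)
  have "(\<Sum>y\<in>targets w - {z}. P w y * f w - P w y * f y) \<le> 0"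
    using sub jump_prob_plus_sum_others[OF w z] Pz
    by (simp add: sum_subtractf sum_distrib_right[symmetric])
  moreover have "0 \<le> (\<Sum>y\<in>targets w - {z}. P w y * f w - P w y * f y)"
    by (rule sum_nonneg) (use le in simp)
  ultimately have "(\<Sum>y\<in>targets w - {z}. P w y * f w - P w y * f y) = 0"
    by simp
  then have zero: "\<forall>y\<in>targets w - {z}. P w y * (f w - f y) = 0"
    by (subst (asm) sum_nonneg_eq_0_iff) (use le finite_targets in \<open>auto simp: right_diff_distrib\<close>)
  show "f y = f w" if "y \<in> targets w - {z}" "0 < P w y" for y
  proof -
    have "P w y * (f w - f y) = 0"
      using zero that(1) by blast
    with that(2) show ?thesis by simp
  qed
qed

lemma subharmonic_max_nonpos:
  assumes z: "z \<in> S"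
    and sub: "\<And>x. x \<in> S - {z} \<Longrightarrow> f x \<le> (\<Sum>y\<in>targets x - {z}. P x y * f y)"
    and w: "w \<in> S - {z}" and max: "\<And>y. y \<in> S - {z} \<Longrightarrow> f y \<le> f w"
  shows "f w \<le> 0"
proof (rule ccontr)
  assume "\<not> f w \<le> 0"
  then have pos: "0 < f w" by simp
  have "last (x # ys) \<noteq> z"
    if "x \<in> S - {z}" "f x = f w" "pos_path lam x ys" "set ys \<subseteq> S" for x ys
    using that
  proof (induction ys arbitrary: x)
    case (Cons y ys)
    then have x: "x \<in> S" and y: "y \<in> S" "y \<noteq> x" "0 < lam (int y - int x) x"
      by auto
    have max_x: "f y' \<le> f x" if "y' \<in> S - {z}" for y'
      using max that Cons.prems(2) by simp
    note step = subharmonic_max_step[OF z x sub[OF Cons.prems(1)] max_x pos[folded Cons.prems(2)]]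
    have "y \<noteq> z"
      using step(1) positive_rate_target(2)[OF x y] by auto
    with step(2) positive_rate_target[OF x y] Cons.prems have "f y = f w"
      by auto
    with Cons.IH[of y] Cons.prems y \<open>y \<noteq> z\<close> show ?case
      by auto
  qed simp
  moreover obtain ys where "set ys \<subseteq> S" "last (w # ys) = z" "pos_path lam w ys"
    using irred w z unfolding irreducible_def by blast
  ultimately show False
    using w by blast
qed

lemma one_minus_hit_prob_harmonic:
  assumes "z \<in> S" "x \<in> S"
  shows "(\<Sum>y\<in>targets x - {z}. P x y * (1 - hit_prob z y)) = 1 - hit_prob z x"
  using jump_prob_plus_sum_others[OF assms(2,1)] hit_prob_first_step[OF assms]
  by (simp add: right_diff_distrib sum_subtractf)

lemma harmonic_minus_superharmonic:
  assumes g: "(\<Sum>y'\<in>targets y - {z}. P y y' * g y') = g y"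
    and U: "(\<Sum>y'\<in>targets y - {z}. P y y' * U y') \<le> U y" and M: "0 < M"
  shows "g y - U y / M \<le> (\<Sum>y'\<in>targets y - {z}. P y y' * (g y' - U y' / M))"
proof -
  have "(\<Sum>y'\<in>targets y - {z}. P y y' * U y') / M \<le> U y / M"
    using U M by (simp add: divide_right_mono)
  then show ?thesis
    using g by (simp add: right_diff_distrib sum_subtractf sum_divide_distrib)
qed

text \<open>Maximum principle argument: 1 - hit_prob z is harmonic for the chain killed at z, and
  subtracting a small multiple of U makes it subharmonic with finite superlevel sets.  If it were
  positive somewhere off z, it would attain a positive maximum there.\<close>
lemma hit_prob_eq_1_off_target:
  assumes z: "z \<in> S"
    and U_nonneg: "\<And>x. x \<in> S \<Longrightarrow> 0 \<le> U x"
    and U_sublevel: "\<And>M. finite {x \<in> S. U x \<le> M}"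
    and U_super: "\<And>x. x \<in> S - {z} \<Longrightarrow> (\<Sum>y\<in>targets x - {z}. P x y * U y) \<le> U x"
    and x: "x \<in> S - {z}"
  shows "hit_prob z x = 1"
proof (rule ccontr)
  assume "hit_prob z x \<noteq> 1"
  with hit_prob_le_1[OF z] x have gx: "0 < 1 - hit_prob z x"
    by force
  have "0 \<le> U x"
    using U_nonneg x by simp
  define M where "M = 2 * (U x + 1) / (1 - hit_prob z x)"
  have M: "0 < M"
    using gx \<open>0 \<le> U x\<close> by (simp add: M_def)
  define f where "f y = (1 - hit_prob z y) - U y / M" for y
  have "U x / M = (1 - hit_prob z x) * (U x / (2 * (U x + 1)))"
    by (simp add: M_def)
  also have "\<dots> < 1 - hit_prob z x"
    using mult_strict_left_mono[of "U x / (2 * (U x + 1))" 1, OF _ gx] \<open>0 \<le> U x\<close> by simp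
  finally have fx: "0 < f x"
    by (simp add: f_def)
  have "{y \<in> S - {z}. f x \<le> f y} \<subseteq> {y \<in> S. U y \<le> M}"
  proof
    fix y assume "y \<in> {y \<in> S - {z}. f x \<le> f y}"
    then have y: "y \<in> S" and "U y / M < 1 - hit_prob z y"
      using fx by (auto simp: f_def)
    then have "U y < (1 - hit_prob z y) * M"
      using M by (simp add: divide_less_eq)
    moreover have "(1 - hit_prob z y) * M \<le> 1 * M"
      using M hit_prob_nonneg[OF z y] by (intro mult_right_mono) auto
    ultimately show "y \<in> {y \<in> S. U y \<le> M}"
      using y by simp
  qed
  then have "finite {y \<in> S - {z}. f x \<le> f y}"
    using U_sublevel finite_subset by blast
  from obtain_max_if_finite_superlevel[OF this x]
  obtain w where w: "w \<in> S - {z}" "f x \<le> f w" and max: "\<And>y. y \<in> S - {z} \<Longrightarrow> f y \<le> f w"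
    by blast
  have sub: "f y \<le> (\<Sum>y'\<in>targets y - {z}. P y y' * f y')" if "y \<in> S - {z}" for y
    unfolding f_def using that
    by (intro harmonic_minus_superharmonic one_minus_hit_prob_harmonic U_super M z) auto
  have "f w \<le> 0"
    by (rule subharmonic_max_nonpos[OF z sub w(1) max])
  with w fx show False
    by simp
qed

lemma hit_prob_eq_1:
  assumes z: "z \<in> S"
    and U_nonneg: "\<And>x. x \<in> S \<Longrightarrow> 0 \<le> U x"
    and U_sublevel: "\<And>M. finite {x \<in> S. U x \<le> M}"
    and U_super: "\<And>x. x \<in> S - {z} \<Longrightarrow> (\<Sum>y\<in>targets x - {z}. P x y * U y) \<le> U x"
    and x: "x \<in> S"
  shows "hit_prob z x = 1"
proof (cases "x = z")
  case False
  with x show ?thesis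
    by (intro hit_prob_eq_1_off_target[OF z U_nonneg U_sublevel U_super]) auto
next
  case True
  have "z \<notin> targets z"
    by (simp add: targets_def)
  have "(\<Sum>y\<in>targets z. P z y * hit_prob z y) = (\<Sum>y\<in>targets z. P z y)"
  proof (rule sum.cong[OF refl])
    fix y assume "y \<in> targets z"
    then have "y \<in> S - {z}"
      using targets_subset \<open>z \<notin> targets z\<close> by blast
    then show "P z y * hit_prob z y = P z y"
      using hit_prob_eq_1_off_target[OF z U_nonneg U_sublevel U_super] by simp
  qed
  moreover have "P z z = 0"
    by (simp add: jump_prob_def)
  ultimately show ?thesis
    using True hit_prob_first_step[OF z z] \<open>z \<notin> targets z\<close> sum_jump_prob[OF z] by simp
qed

lemma hit_time_upto_le:
  assumes z: "z \<in> S"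
    and g_nonneg: "\<And>x. x \<in> S \<Longrightarrow> 0 \<le> g x"
    and g_super: "\<And>x. x \<in> S - {z} \<Longrightarrow> 1 / q x + (\<Sum>y\<in>targets x - {z}. P x y * g y) \<le> g x"
  shows "x \<in> S \<Longrightarrow> hit_time_upto z n x \<le> 1 / q x + (\<Sum>y\<in>targets x - {z}. P x y * g y)"
proof (induction n arbitrary: x)
  case 0
  have "0 \<le> (\<Sum>y\<in>targets x - {z}. P x y * g y)"
    using 0 targets_subset by (intro sum_nonneg mult_nonneg_nonneg jump_prob_nonneg g_nonneg) auto
  then show ?case
    using qrate_pos[OF 0] by simp
next
  case (Suc n)
  have "P x y / q x * hit_prob_upto z n y + P x y * hit_time_upto z n y \<le> P x y / q x + P x y * g y"
    if "y \<in> targets x - {z}" for y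
  proof -
    have y: "y \<in> S" "y \<in> S - {z}"
      using that targets_subset by auto
    have "hit_time_upto z n y \<le> g y"
      using Suc.IH[OF y(1)] g_super[OF y(2)] by simp
    moreover have "hit_prob_upto z n y \<le> 1"
      using hit_prob_upto_le_1[OF z y(1)] .
    moreover have "0 \<le> P x y" "0 \<le> P x y / q x"
      using jump_prob_nonneg[OF Suc.prems, of y] qrate_pos[OF Suc.prems] by auto
    ultimately show ?thesis
      by (intro add_mono mult_left_le mult_left_mono)
  qed
  then have "hit_time_upto z (Suc n) x \<le> P x z / q x + (\<Sum>y\<in>targets x - {z}. P x y / q x + P x y * g y)"
    unfolding hit_time_upto.simps by (intro add_left_mono sum_mono)
  also have "\<dots> = (P x z + (\<Sum>y\<in>targets x - {z}. P x y)) / q x + (\<Sum>y\<in>targets x - {z}. P x y * g y)"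
    by (simp add: sum.distrib add_divide_distrib sum_divide_distrib)
  also have "\<dots> = 1 / q x + (\<Sum>y\<in>targets x - {z}. P x y * g y)"
    using jump_prob_plus_sum_others[OF Suc.prems z] by simp
  finally show ?case .
qed

lemma return_time_finite:
  assumes z: "z \<in> S"
    and g_nonneg: "\<And>x. x \<in> S \<Longrightarrow> 0 \<le> g x"
    and g_super: "\<And>x. x \<in> S - {z} \<Longrightarrow> 1 / q x + (\<Sum>y\<in>targets x - {z}. P x y * g y) \<le> g x"
  shows "(\<integral>\<^sup>+ys. ennreal (path_prob \<Gamma> lam z ys * hold_time \<Gamma> lam z ys) \<partial>count_space (return_paths S z)) < \<infinity>"
proof -
  have "(\<integral>\<^sup>+ys. ennreal (path_prob \<Gamma> lam z ys * hold_time \<Gamma> lam z ys) \<partial>count_space (return_paths S z))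
     = (SUP n. ennreal (hit_time_upto z n z))"
    by (simp only: nn_integral_return_paths_SUP nn_integral_path_time_upto[OF z z])
  also have "\<dots> \<le> ennreal (1 / q z + (\<Sum>y\<in>targets z - {z}. P z y * g y))"
    by (intro SUP_least ennreal_leI hit_time_upto_le[OF z g_nonneg g_super z])
  also have "\<dots> < \<infinity>"
    by simp
  finally show ?thesis .
qed

definition steps_to :: "nat \<Rightarrow> nat \<Rightarrow> nat" where
  "steps_to z x = (LEAST n. \<exists>ys. length ys = n \<and> set ys \<subseteq> S \<and> last (x # ys) = z \<and> pos_path lam x ys)"

lemma steps_to_path:
  assumes "z \<in> S" "x \<in> S"
  obtains ys where "length ys = steps_to z x" "set ys \<subseteq> S" "last (x # ys) = z" "pos_path lam x ys"
proof -
  have "\<exists>n ys. length ys = n \<and> set ys \<subseteq> S \<and> last (x # ys) = z \<and> pos_path lam x ys"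
    using irred assms unfolding irreducible_def by blast
  then have "\<exists>ys. length ys = steps_to z x \<and> set ys \<subseteq> S \<and> last (x # ys) = z \<and> pos_path lam x ys"
    unfolding steps_to_def by (rule LeastI_ex)
  then show ?thesis
    using that by blast
qed

lemma steps_to_le: "set ys \<subseteq> S \<Longrightarrow> last (x # ys) = z \<Longrightarrow> pos_path lam x ys \<Longrightarrow> steps_to z x \<le> length ys"
  unfolding steps_to_def by (rule Least_le) blast

lemma steps_to_eq_0: "z \<in> S \<Longrightarrow> x \<in> S \<Longrightarrow> steps_to z x = 0 \<Longrightarrow> x = z"
  by (metis steps_to_path last.simps length_0_conv)

lemma steps_to_decreases:
  assumes z: "z \<in> S" and x: "x \<in> S" and "x \<noteq> z"
  obtains y where "y \<in> targets x" "steps_to z y < steps_to z x" "0 < P x y"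
proof -
  obtain ys where ys: "length ys = steps_to z x" "set ys \<subseteq> S" "last (x # ys) = z" "pos_path lam x ys"
    using steps_to_path[OF z x] .
  with \<open>x \<noteq> z\<close> obtain y ys' where ys': "ys = y # ys'"
    by (cases ys) auto
  with ys have y: "y \<in> S" "y \<noteq> x" "0 < lam (int y - int x) x"
    by auto
  have "steps_to z y \<le> length ys'"
    by (rule steps_to_le) (use ys ys' in auto)
  with ys(1) ys' have "steps_to z y < steps_to z x"
    by simp
  with positive_rate_target[OF x y] that show ?thesis
    by blast
qed

lemma le_last_pos_path:
  "x \<in> S \<Longrightarrow> set ys \<subseteq> S \<Longrightarrow> pos_path lam x ys \<Longrightarrow> x \<le> last (x # ys) + length ys * jump_size"
proof (induction ys arbitrary: x)
  case (Cons y ys)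
  then have x: "x \<in> S" and y: "y \<in> S" "y \<noteq> x" "0 < lam (int y - int x) x"
    by auto
  have "int y - int x \<in> \<Gamma>"
    using positive_rate_target(1)[OF x y] by (simp add: targets_def)
  then have "x \<le> y + jump_size"
    using abs_le_jump_size by fastforce
  moreover have "y \<le> last (y # ys) + length ys * jump_size"
    using Cons.IH y Cons.prems by auto
  ultimately show ?case
    by simp
qed simp

lemma finite_steps_to_le:
  assumes z: "z \<in> S"
  shows "finite {y \<in> S. steps_to z y \<le> D}"
proof (rule finite_subset)
  show "{y \<in> S. steps_to z y \<le> D} \<subseteq> {..z + D * jump_size}"
  proof
    fix y assume "y \<in> {y \<in> S. steps_to z y \<le> D}"
    then have y: "y \<in> S" and "steps_to z y \<le> D"
      by auto
    obtain ys where ys: "length ys = steps_to z y" "set ys \<subseteq> S" "last (y # ys) = z" "pos_path lam y ys"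
      using steps_to_path[OF z y] .
    have "y \<le> last (y # ys) + length ys * jump_size"
      using le_last_pos_path[OF y ys(2,4)] .
    then have "y \<le> z + steps_to z y * jump_size"
      unfolding ys(1,3) .
    also have "\<dots> \<le> z + D * jump_size"
      using \<open>steps_to z y \<le> D\<close> by simp
    finally show "y \<in> {..z + D * jump_size}"
      by simp
  qed
qed simp

lemma uniform_step_closer:
  assumes z: "z \<in> S" and F: "finite F"
  obtains p where "0 < p" "p \<le> 1"
    "\<And>x. x \<in> F \<Longrightarrow> x \<in> S \<Longrightarrow> x \<noteq> z \<Longrightarrow> \<exists>y\<in>targets x. steps_to z y < steps_to z x \<and> p \<le> P x y"
proof -
  have "\<forall>x\<in>F \<inter> S - {z}. \<exists>y. (y \<in> targets x \<and> steps_to z y < steps_to z x) \<and> 0 < P x y"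
    using steps_to_decreases[OF z] by blast
  then obtain p where "0 < p" "\<forall>x\<in>F \<inter> S - {z}. \<exists>y. (y \<in> targets x \<and> steps_to z y < steps_to z x) \<and> p \<le> P x y"
    using finite_uniform_positive_choice[of "F \<inter> S - {z}"
        "\<lambda>x y. y \<in> targets x \<and> steps_to z y < steps_to z x" "\<lambda>x y. P x y"] F by auto
  then show ?thesis
    by (intro that[of "min p 1"]) (auto intro: order_trans[OF min.cobounded1])
qed

definition geometric_correction :: "nat \<Rightarrow> nat \<Rightarrow> real \<Rightarrow> real \<Rightarrow> nat \<Rightarrow> real" where
  "geometric_correction z D C \<theta> y =
    (if y \<in> S \<and> steps_to z y \<le> D then C * (1 - \<theta> ^ steps_to z y) else C)"

lemma geometric_correction_bounds:
  assumes "0 \<le> C" "0 \<le> \<theta>" "\<theta> \<le> 1"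
  shows "0 \<le> geometric_correction z D C \<theta> y" and "geometric_correction z D C \<theta> y \<le> C"
proof -
  have "0 \<le> \<theta> ^ steps_to z y" "\<theta> ^ steps_to z y \<le> 1"
    using assms by (simp_all add: power_le_one)
  with assms show "0 \<le> geometric_correction z D C \<theta> y" "geometric_correction z D C \<theta> y \<le> C"
    by (simp_all add: geometric_correction_def mult_left_le)
qed

text \<open>One step closer to z, taken with probability at least 2 * \<theta>, lowers the mean of the
  correction by at least C * \<theta> * \<theta> ^ D.\<close>
lemma geometric_correction_drift:
  assumes z: "z \<in> S" and x: "x \<in> S - {z}" "steps_to z x \<le> D"
    and C: "0 \<le> C" and \<theta>: "0 < \<theta>" "\<theta> < 1"
    and y0: "y0 \<in> targets x" "steps_to z y0 < steps_to z x" "2 * \<theta> \<le> P x y0"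
  shows "(\<Sum>y\<in>targets x. P x y * geometric_correction z D C \<theta> y) + C * \<theta> * \<theta> ^ D
    \<le> geometric_correction z D C \<theta> x"
proof -
  let ?W = "geometric_correction z D C \<theta>"
  define k where "k = steps_to z x"
  have "k \<noteq> 0"
    using steps_to_eq_0[OF z] x by (auto simp: k_def)
  have "y0 \<in> S"
    using y0(1) targets_subset by blast
  moreover have "\<theta> ^ (k - 1) \<le> \<theta> ^ steps_to z y0"
    using y0 \<theta> by (intro power_decreasing) (auto simp: k_def)
  ultimately have W_y0: "C * \<theta> ^ (k - 1) \<le> C - ?W y0"
    using C x y0 by (simp add: geometric_correction_def k_def right_diff_distrib mult_left_mono)
  have "(\<Sum>y\<in>targets x. P x y * ?W y) \<le> C - P x y0 * (C - ?W y0)"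
    using x C \<theta> by (intro sum_jump_prob_mult_le y0(1) geometric_correction_bounds) auto
  also have "\<dots> \<le> C - 2 * \<theta> * (C * \<theta> ^ (k - 1))"
    using y0(3) W_y0 C \<theta> by (intro diff_left_mono mult_mono) auto
  also have "\<dots> = ?W x - C * \<theta> * \<theta> ^ (k - 1)"
  proof -
    have "\<theta> ^ k = \<theta> * \<theta> ^ (k - 1)"
      using \<open>k \<noteq> 0\<close> by (simp add: power_eq_if)
    then show ?thesis
      using x by (simp add: geometric_correction_def k_def[symmetric] algebra_simps)
  qed
  finally have "(\<Sum>y\<in>targets x. P x y * ?W y) \<le> ?W x - C * \<theta> * \<theta> ^ (k - 1)" .
  moreover have "C * \<theta> * \<theta> ^ D \<le> C * \<theta> * \<theta> ^ (k - 1)"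
    using C \<theta> x by (intro mult_left_mono power_decreasing) (auto simp: k_def)
  ultimately show ?thesis
    by simp
qed

lemma finite_drift_correction:
  assumes z: "z \<in> S" and E: "finite E" and B: "0 \<le> B"
  obtains W where "\<And>x. 0 \<le> W x"
    "\<And>x. x \<in> S - {z} \<Longrightarrow> (\<Sum>y\<in>targets x. P x y * W y) + (if x \<in> E then B else 0) \<le> W x"
proof -
  define D where "D = Max (insert 0 (steps_to z ` E))"
  define F where "F = {y \<in> S. steps_to z y \<le> D}"
  have E_F: "x \<in> F" if "x \<in> E" "x \<in> S" for x
    using that E by (auto simp: F_def D_def)
  obtain p where p: "0 < p" "p \<le> 1"
    and closer: "\<And>x. x \<in> F \<Longrightarrow> x \<in> S \<Longrightarrow> x \<noteq> z \<Longrightarrow> \<exists>y\<in>targets x. steps_to z y < steps_to z x \<and> p \<le> P x y"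
    using uniform_step_closer[OF z finite_steps_to_le[OF z, of D, folded F_def]] by blast
  define \<theta> where "\<theta> = p / 2"
  have \<theta>: "0 < \<theta>" "\<theta> < 1"
    using p by (auto simp: \<theta>_def)
  define C where "C = B / (\<theta> * \<theta> ^ D)"
  have C: "0 \<le> C" "C * \<theta> * \<theta> ^ D = B"
    using B \<theta> by (simp_all add: C_def)
  let ?W = "geometric_correction z D C \<theta>"
  have "(\<Sum>y\<in>targets x. P x y * ?W y) + (if x \<in> E then B else 0) \<le> ?W x" if x: "x \<in> S - {z}" for x
  proof (cases "x \<in> F")
    case True
    then obtain y0 where "y0 \<in> targets x" "steps_to z y0 < steps_to z x" "2 * \<theta> \<le> P x y0"
      using closer x by (auto simp: \<theta>_def)
    with True x C \<theta> have "(\<Sum>y\<in>targets x. P x y * ?W y) + B \<le> ?W x"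
      unfolding C(2)[symmetric] by (intro geometric_correction_drift z) (auto simp: F_def)
    with B show ?thesis
      by auto
  next
    case False
    have "(\<Sum>y\<in>targets x. P x y * ?W y) \<le> (\<Sum>y\<in>targets x. P x y * C)"
      using x C \<theta> by (intro sum_mono mult_left_mono geometric_correction_bounds jump_prob_nonneg) auto
    also have "\<dots> = C"
      using sum_jump_prob x by (simp add: sum_distrib_right[symmetric])
    finally show ?thesis
      using False E_F x by (auto simp: geometric_correction_def F_def)
  qed
  moreover have "0 \<le> ?W x" for x
    using C \<theta> by (intro geometric_correction_bounds) auto
  ultimately show ?thesis
    using that by blast
qed

lemma drift_correction:
  assumes z: "z \<in> S" and E: "finite E" and f_nonneg: "\<And>x. 0 \<le> f x"
    and drift: "\<And>x. x \<in> S - E \<Longrightarrow> r x + (\<Sum>y\<in>targets x. P x y * f y) \<le> f x"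
  obtains g where "\<And>x. f x \<le> g x"
    "\<And>x. x \<in> S - {z} \<Longrightarrow> r x + (\<Sum>y\<in>targets x - {z}. P x y * g y) \<le> g x"
proof -
  define B where "B = Max (insert 0 ((\<lambda>x. r x + (\<Sum>y\<in>targets x. P x y * f y) - f x) ` E))"
  have B: "0 \<le> B" and B_ge: "\<And>x. x \<in> E \<Longrightarrow> r x + (\<Sum>y\<in>targets x. P x y * f y) - f x \<le> B"
    unfolding B_def using E by auto
  obtain W where W_nonneg: "\<And>x. 0 \<le> W x"
    and W: "\<And>x. x \<in> S - {z} \<Longrightarrow> (\<Sum>y\<in>targets x. P x y * W y) + (if x \<in> E then B else 0) \<le> W x"
    using finite_drift_correction[OF z E B] by blast
  have "r x + (\<Sum>y\<in>targets x - {z}. P x y * (f y + W y)) \<le> f x + W x" if x: "x \<in> S - {z}" for x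
  proof -
    have "(\<Sum>y\<in>targets x - {z}. P x y * (f y + W y)) \<le> (\<Sum>y\<in>targets x. P x y * (f y + W y))"
      using x f_nonneg W_nonneg
      by (intro sum_mono2 finite_targets mult_nonneg_nonneg jump_prob_nonneg add_nonneg_nonneg) auto
    also have "\<dots> = (\<Sum>y\<in>targets x. P x y * f y) + (\<Sum>y\<in>targets x. P x y * W y)"
      by (simp add: distrib_left sum.distrib)
    finally show ?thesis
      using W[OF x] B_ge[of x] drift[of x] x by (cases "x \<in> E") auto
  qed
  then show ?thesis
    using that[of "\<lambda>x. f x + W x"] W_nonneg by auto
qed

text \<open>Since the mean of f after one jump is f x + gen f x / q x, a drift bound outside a finite
  set becomes, after a bounded correction, a supermartingale condition for the chain killed at z.\<close>
lemma return_time_finite_if_drift: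
  assumes z: "z \<in> S" and V_nonneg: "\<And>x. 0 \<le> V x"
    and V_drift: "eventually (\<lambda>x. gen V x \<le> -1) (inf sequentially (principal S))"
  shows "(\<integral>\<^sup>+ys. ennreal (path_prob \<Gamma> lam z ys * hold_time \<Gamma> lam z ys) \<partial>count_space (return_paths S z)) < \<infinity>"
proof -
  have V_off: "1 / q x + (\<Sum>y\<in>targets x. P x y * V y) \<le> V x"
    if "x \<in> S - {x \<in> S. \<not> gen V x \<le> -1}" for x
  proof -
    have "(1 + gen V x) / q x \<le> 0"
      using that qrate_pos[of x] by (intro divide_nonpos_pos) auto
    then show ?thesis
      using that sum_jump_prob_mult[of x V] by (simp add: add_divide_distrib)
  qed
  obtain g where g: "\<And>x. V x \<le> g x"
    "\<And>x. x \<in> S - {z} \<Longrightarrow> 1 / q x + (\<Sum>y\<in>targets x - {z}. P x y * g y) \<le> g x"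
    using drift_correction[of z _ V "\<lambda>x. 1 / q x", OF z finite_if_eventually_in[OF V_drift] V_nonneg V_off]
    by blast
  have "0 \<le> g x" for x
    using V_nonneg[of x] g(1)[of x] by linarith
  then show ?thesis
    using return_time_finite[OF z _ g(2)] by blast
qed

lemma return_prob_eq_1_if_drift:
  assumes z: "z \<in> S" and U_nonneg: "\<And>x. 0 \<le> U x" and U_sublevel: "\<And>M. finite {x \<in> S. U x \<le> M}"
    and U_drift: "eventually (\<lambda>x. gen U x \<le> 0) (inf sequentially (principal S))"
  shows "(\<integral>\<^sup>+ys. ennreal (path_prob \<Gamma> lam z ys) \<partial>count_space (return_paths S z)) = 1"
proof -
  have U_off: "0 + (\<Sum>y\<in>targets x. P x y * U y) \<le> U x" if "x \<in> S - {x \<in> S. \<not> gen U x \<le> 0}" for x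
    using that sum_jump_prob_mult[of x U] qrate_pos[of x] by (auto simp: divide_nonpos_pos)
  obtain h where h: "\<And>x. U x \<le> h x"
    "\<And>x. x \<in> S - {z} \<Longrightarrow> 0 + (\<Sum>y\<in>targets x - {z}. P x y * h y) \<le> h x"
    using drift_correction[of z _ U "\<lambda>_. 0", OF z finite_if_eventually_in[OF U_drift] U_nonneg U_off]
    by blast
  have "0 \<le> h x" for x
    using U_nonneg[of x] h(1)[of x] by linarith
  moreover have "finite {x \<in> S. h x \<le> M}" for M
    by (rule finite_subset[OF _ U_sublevel[of M]]) (use h(1) in \<open>auto intro: order_trans\<close>)
  moreover have "(\<Sum>y\<in>targets x - {z}. P x y * h y) \<le> h x" if "x \<in> S - {z}" for x
    using h(2)[OF that] by simp
  ultimately have "hit_prob z z = 1"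
    using hit_prob_eq_1[OF z] z by blast
  then show ?thesis
    using nn_integral_return_prob[OF z z] by simp
qed

theorem positive_recurrent_if_drift:
  assumes V_nonneg: "\<And>x. 0 \<le> V x"
    and V_drift: "eventually (\<lambda>x. gen V x \<le> -1) (inf sequentially (principal S))"
    and U_nonneg: "\<And>x. 0 \<le> U x" and U_sublevel: "\<And>M. finite {x \<in> S. U x \<le> M}"
    and U_drift: "eventually (\<lambda>x. gen U x \<le> 0) (inf sequentially (principal S))"
  shows "positive_recurrent S \<Gamma> lam"
  unfolding positive_recurrent_def
  using return_prob_eq_1_if_drift[OF _ U_nonneg U_sublevel U_drift]
    return_time_finite_if_drift[OF _ V_nonneg V_drift]
  by blast

end

section \<open>Taylor bounds for the generator\<close>

lemma taylor_third_order_upper: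
  fixes f df d2f d3f :: "real \<Rightarrow> real"
  assumes df: "\<And>t. a \<le> t \<Longrightarrow> t \<le> b \<Longrightarrow> (f has_real_derivative df t) (at t)"
    and d2f: "\<And>t. a \<le> t \<Longrightarrow> t \<le> b \<Longrightarrow> (df has_real_derivative d2f t) (at t)"
    and d3f: "\<And>t. a \<le> t \<Longrightarrow> t \<le> b \<Longrightarrow> (d2f has_real_derivative d3f t) (at t)"
    and d3f_bound: "\<And>t. a \<le> t \<Longrightarrow> t \<le> b \<Longrightarrow> \<bar>d3f t\<bar> \<le> M"
    and c: "a \<le> c" "c \<le> b" and x: "a \<le> x" "x \<le> b"
  shows "f x - f c \<le> df c * (x - c) + d2f c / 2 * (x - c)^2 + M / 6 * \<bar>x - c\<bar>^3"
proof (cases "x = c")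
  case False
  define diff where "diff m = (if m = 0 then f else if m = 1 then df else if m = 2 then d2f else d3f)"
    for m :: nat
  have derivs: "\<forall>m t. m < 3 \<and> a \<le> t \<and> t \<le> b \<longrightarrow> (diff m has_real_derivative diff (Suc m) t) (at t)"
  proof (intro allI impI)
    fix m :: nat and t :: real assume "m < 3 \<and> a \<le> t \<and> t \<le> b"
    moreover from this have "m = 0 \<or> m = 1 \<or> m = 2" by auto
    ultimately show "(diff m has_real_derivative diff (Suc m) t) (at t)"
      using df d2f d3f by (auto simp: diff_def)
  qed
  obtain t where t: "if x < c then x < t \<and> t < c else c < t \<and> t < x"
    and taylor: "f x = (\<Sum>m<3. diff m c / fact m * (x - c)^m) + diff 3 t / fact 3 * (x - c)^3"
    using Taylor[of 3 diff f a b c x, OF _ _ derivs c x False] by (auto simp: diff_def)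
  have "(\<Sum>m<3. diff m c / fact m * (x - c)^m) = f c + df c * (x - c) + d2f c / 2 * (x - c)^2"
    by (simp add: diff_def numeral_3_eq_3 lessThan_Suc fact_numeral power2_eq_square)
  moreover have "diff 3 t / fact 3 * (x - c)^3 \<le> M / 6 * \<bar>x - c\<bar>^3"
  proof -
    have "diff 3 t / fact 3 * (x - c)^3 \<le> \<bar>d3f t / 6 * (x - c)^3\<bar>"
      by (simp add: diff_def fact_numeral)
    also have "\<dots> = \<bar>d3f t\<bar> / 6 * \<bar>x - c\<bar>^3"
      by (simp add: abs_mult power_abs)
    also have "\<dots> \<le> M / 6 * \<bar>x - c\<bar>^3"
      using t c x by (intro mult_right_mono divide_right_mono d3f_bound) (auto split: if_splits)
    finally show ?thesis .
  qed
  ultimately show ?thesis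
    using taylor by simp
qed simp

lemma powr_le_on_dyadic_interval:
  fixes x t \<beta> :: real
  assumes x: "0 < x" and t: "x / 2 \<le> t" "t \<le> 2 * x"
  shows "t powr \<beta> \<le> 2 powr \<bar>\<beta>\<bar> * x powr \<beta>"
proof (cases "0 \<le> \<beta>")
  case True
  have "t powr \<beta> \<le> (2 * x) powr \<beta>"
    using t x True by (intro powr_mono2) auto
  also have "\<dots> = 2 powr \<bar>\<beta>\<bar> * x powr \<beta>"
    using True x by (simp add: powr_mult)
  finally show ?thesis .
next
  case False
  have "t powr \<beta> \<le> (x / 2) powr \<beta>"
    using t x False by (intro powr_mono2') auto
  also have "\<dots> = x powr \<beta> / 2 powr \<beta>"
    using x by (simp add: powr_divide)
  also have "\<dots> = 2 powr \<bar>\<beta>\<bar> * x powr \<beta>"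
    using False powr_minus[of 2 \<beta>] by (simp add: divide_inverse mult.commute)
  finally show ?thesis .
qed

lemma ln_on_dyadic_interval:
  fixes x t :: real
  assumes x: "8 \<le> x" and t: "x / 2 \<le> t" "t \<le> 2 * x"
  shows "1 \<le> ln t" and "ln x \<le> 2 * ln t"
proof -
  have "exp 1 \<le> t" "0 < t"
    using exp_le x t by linarith+
  then show "1 \<le> ln t"
    using ln_ge_iff[of t 1] by simp
  have "x * 4 \<le> x * x"
    using x by (intro mult_left_mono) auto
  then have "x \<le> (x / 2) * (x / 2)"
    by simp
  also have "\<dots> \<le> t * t"
    using t x by (intro mult_mono) auto
  finally have "ln x \<le> ln (t * t)"
    using x by simp
  then show "ln x \<le> 2 * ln t"
    using t x by (simp add: ln_mult)
qed

lemma lnln_third_derivative_bound: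
  fixes x t :: real
  assumes x: "8 \<le> x" and t: "x / 2 \<le> t" "t \<le> 2 * x"
  shows "\<bar>(2 * (ln t)^2 + 3 * ln t + 2) / (t^3 * (ln t)^3)\<bar> \<le> 112 / (x^3 * ln x)"
proof -
  have L: "1 \<le> ln t" "ln x \<le> 2 * ln t"
    using ln_on_dyadic_interval[OF assms] by auto
  have t0: "0 < t" and "0 < ln t"
    using x t L by simp_all
  have "\<bar>(2 * (ln t)^2 + 3 * ln t + 2) / (t^3 * (ln t)^3)\<bar> = (2 * (ln t)^2 + 3 * ln t + 2) / (t^3 * (ln t)^3)"
    using t0 \<open>0 < ln t\<close> by (intro abs_of_nonneg divide_nonneg_pos add_nonneg_nonneg) auto
  also have "\<dots> \<le> 7 * (ln t)^2 / (t^3 * (ln t)^3)"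
  proof (rule divide_right_mono)
    have "ln t \<le> (ln t)^2" "1 \<le> (ln t)^2"
      using mult_left_mono[OF L(1), of "ln t"] mult_mono[OF L(1) L(1)] L(1) by (simp_all add: power2_eq_square)
    then show "2 * (ln t)^2 + 3 * ln t + 2 \<le> 7 * (ln t)^2"
      by linarith
    show "0 \<le> t^3 * (ln t)^3"
      using t0 \<open>0 < ln t\<close> by simp
  qed
  also have "\<dots> = 7 / (t^3 * ln t)"
    using L by (simp add: power2_eq_square power3_eq_cube)
  also have "\<dots> \<le> 7 / ((x / 2)^3 * (ln x / 2))"
    using L t0 x t by (intro divide_left_mono mult_mono power_mono mult_pos_pos) auto
  also have "\<dots> = 112 / (x^3 * ln x)"
    by (simp add: field_simps)
  finally show ?thesis .
qed

lemma powr_minus_one_div_nonneg: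
  fixes t \<alpha> :: real
  assumes "1 \<le> t" "\<alpha> \<noteq> 0"
  shows "0 \<le> (t powr \<alpha> - 1) / \<alpha>"
proof (cases "0 < \<alpha>")
  case True
  then have "1 \<le> t powr \<alpha>"
    using assms by (simp add: ge_one_powr_ge_zero)
  with True show ?thesis by simp
next
  case False
  with assms have "t powr \<alpha> \<le> t powr 0"
    by (intro powr_mono) auto
  with False assms show ?thesis
    by (intro divide_nonpos_neg) auto
qed

definition powr_lyapunov :: "real \<Rightarrow> nat \<Rightarrow> real" where
  "powr_lyapunov \<alpha> y = max 0 ((real y powr \<alpha> - 1) / \<alpha>)"

text \<open>On [x / 2, 2 * x] the third derivative of t powr \<alpha> / \<alpha> is bounded by this constant times
  x powr (\<alpha> - 3).\<close>
definition powr_remainder_const :: "real \<Rightarrow> real" where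
  "powr_remainder_const \<alpha> = \<bar>(\<alpha> - 1) * (\<alpha> - 2)\<bar> * 2 powr \<bar>\<alpha> - 3\<bar>"

definition lnln_lyapunov :: "nat \<Rightarrow> real" where
  "lnln_lyapunov y = (if 3 \<le> y then ln (ln (real y)) else 0)"

lemma powr_lyapunov_nonneg: "0 \<le> powr_lyapunov \<alpha> y"
  by (simp add: powr_lyapunov_def)

lemma lnln_lyapunov_nonneg: "0 \<le> lnln_lyapunov y"
proof (cases "3 \<le> y")
  case True
  then have "exp 1 \<le> real y"
    using exp_le by linarith
  then have "1 \<le> ln (real y)"
    using True ln_ge_iff[of "real y" 1] by simp
  with True show ?thesis
    by (simp add: lnln_lyapunov_def)
qed (simp add: lnln_lyapunov_def)

lemma finite_lnln_lyapunov_sublevel: "finite {y. lnln_lyapunov y \<le> M}"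
proof (rule finite_subset)
  show "{y. lnln_lyapunov y \<le> M} \<subseteq> {..max 3 (nat \<lceil>exp (exp M)\<rceil>)}"
  proof (rule subsetI, rule ccontr)
    fix y assume "y \<in> {y. lnln_lyapunov y \<le> M}" "y \<notin> {..max 3 (nat \<lceil>exp (exp M)\<rceil>)}"
    then have y: "3 < y" "nat \<lceil>exp (exp M)\<rceil> < y"
      by auto
    with \<open>y \<in> {y. lnln_lyapunov y \<le> M}\<close> have le: "ln (ln (real y)) \<le> M"
      by (simp add: lnln_lyapunov_def)
    from y(2) have "real (nat \<lceil>exp (exp M)\<rceil>) < real y"
      by simp
    then have "exp (exp M) < real y"
      using real_nat_ceiling_ge[of "exp (exp M)"] by linarith
    then have "exp M < ln (real y)"
      using ln_less_cancel_iff[of "exp (exp M)" "real y"] y(1) by simp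
    then have "M < ln (ln (real y))"
      using ln_less_cancel_iff[of "exp M" "ln (real y)"] exp_gt_zero[of M] by simp
    with le show False
      by simp
  qed
qed simp

context jump_chain
begin

lemma gen_le_of_jump_bound:
  assumes x: "x \<in> S" and M: "0 \<le> M"
    and jump: "\<And>\<eta>. \<eta> \<in> \<Gamma> \<Longrightarrow> f (nat (int x + \<eta>)) - f x
      \<le> a * real_of_int \<eta> + b / 2 * (real_of_int \<eta>)^2 + M / 6 * \<bar>real_of_int \<eta>\<bar>^3"
  shows "gen f x \<le> a * drift \<Gamma> lam x + b * diffu \<Gamma> lam x + M * real jump_size / 3 * diffu \<Gamma> lam x"
proof -
  have lam_nonneg: "0 \<le> lam \<eta> x" for \<eta>
    using rates_nonneg x by auto
  have cube_le: "lam \<eta> x * \<bar>real_of_int \<eta>\<bar>^3 \<le> real jump_size * ((real_of_int \<eta>)^2 * lam \<eta> x)"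
    if "\<eta> \<in> \<Gamma>" for \<eta>
  proof -
    have "\<bar>real_of_int \<eta>\<bar>^3 = \<bar>real_of_int \<eta>\<bar> * (real_of_int \<eta>)^2"
      by (simp add: power3_eq_cube power2_eq_square)
    also have "\<dots> \<le> real jump_size * (real_of_int \<eta>)^2"
      using abs_le_jump_size_real[OF that] by (intro mult_right_mono) auto
    finally have "\<bar>real_of_int \<eta>\<bar>^3 \<le> real jump_size * (real_of_int \<eta>)^2" .
    from mult_left_mono[OF this lam_nonneg[of \<eta>]] show ?thesis
      by (simp add: algebra_simps)
  qed
  have "gen f x \<le> (\<Sum>\<eta>\<in>\<Gamma>. lam \<eta> x * (a * real_of_int \<eta> + b / 2 * (real_of_int \<eta>)^2
      + M / 6 * \<bar>real_of_int \<eta>\<bar>^3))"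
    unfolding gen_def by (intro sum_mono mult_left_mono jump lam_nonneg)
  also have "\<dots> = a * drift \<Gamma> lam x + b * diffu \<Gamma> lam x + M / 6 * (\<Sum>\<eta>\<in>\<Gamma>. lam \<eta> x * \<bar>real_of_int \<eta>\<bar>^3)"
    by (simp add: drift_def diffu_def algebra_simps sum.distrib sum_distrib_left)
  also have "\<dots> \<le> a * drift \<Gamma> lam x + b * diffu \<Gamma> lam x + M / 6 * (2 * real jump_size * diffu \<Gamma> lam x)"
    using M cube_le sum_mono[of \<Gamma> "\<lambda>\<eta>. lam \<eta> x * \<bar>real_of_int \<eta>\<bar>^3"]
    by (intro add_left_mono mult_left_mono) (auto simp: diffu_def sum_distrib_left)
  finally show ?thesis
    by simp
qed

lemma gen_le_taylor:
  fixes F dF d2F d3F :: "real \<Rightarrow> real"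
  assumes x: "x \<in> S" and large: "2 * real jump_size \<le> real x"
    and f_eq: "\<And>y. real x / 2 \<le> real y \<Longrightarrow> real y \<le> 2 * real x \<Longrightarrow> f y = F (real y)"
    and dF: "\<And>t. real x / 2 \<le> t \<Longrightarrow> t \<le> 2 * real x \<Longrightarrow> (F has_real_derivative dF t) (at t)"
    and d2F: "\<And>t. real x / 2 \<le> t \<Longrightarrow> t \<le> 2 * real x \<Longrightarrow> (dF has_real_derivative d2F t) (at t)"
    and d3F: "\<And>t. real x / 2 \<le> t \<Longrightarrow> t \<le> 2 * real x \<Longrightarrow> (d2F has_real_derivative d3F t) (at t)"
    and d3F_bound: "\<And>t. real x / 2 \<le> t \<Longrightarrow> t \<le> 2 * real x \<Longrightarrow> \<bar>d3F t\<bar> \<le> M"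
  shows "gen f x \<le> dF (real x) * drift \<Gamma> lam x + d2F (real x) * diffu \<Gamma> lam x
    + M * real jump_size / 3 * diffu \<Gamma> lam x"
proof (rule gen_le_of_jump_bound[OF x])
  define X where "X = real x"
  have "\<bar>d3F X\<bar> \<le> M"
    using d3F_bound[of X] by (simp add: X_def)
  then show "0 \<le> M"
    using abs_ge_zero[of "d3F X"] by linarith
  fix \<eta> assume \<eta>: "\<eta> \<in> \<Gamma>"
  define t where "t = X + real_of_int \<eta>"
  have t: "X / 2 \<le> t" "t \<le> 2 * X"
    using abs_le_jump_size_real[OF \<eta>] large by (auto simp: t_def X_def)
  then have "real (nat (int x + \<eta>)) = t"
    by (simp add: t_def X_def)
  with t have "f (nat (int x + \<eta>)) - f x = F t - F X"
    using f_eq[of x] by (simp add: f_eq X_def)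
  also have "\<dots> \<le> dF X * (t - X) + d2F X / 2 * (t - X)^2 + M / 6 * \<bar>t - X\<bar>^3"
    by (rule taylor_third_order_upper[where a = "X / 2" and b = "2 * X" and df = dF and d2f = d2F and d3f = d3F])
      (use t dF d2F d3F d3F_bound in \<open>auto simp: X_def\<close>)
  finally show "f (nat (int x + \<eta>)) - f x
      \<le> dF (real x) * real_of_int \<eta> + d2F (real x) / 2 * (real_of_int \<eta>)^2 + M / 6 * \<bar>real_of_int \<eta>\<bar>^3"
    by (simp add: t_def X_def)
qed

lemma gen_powr_lyapunov_le:
  assumes \<alpha>: "\<alpha> \<noteq> 0" and x: "x \<in> S" and large: "2 * real jump_size + 2 \<le> real x"
  shows "gen (powr_lyapunov \<alpha>) x \<le> real x powr (\<alpha> - 2) * diffu \<Gamma> lam x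
    * (Jfun \<Gamma> lam x + \<alpha> - 1 + powr_remainder_const \<alpha> * real jump_size / (3 * real x))"
proof -
  define K where "K = powr_remainder_const \<alpha>"
  define X where "X = real x"
  have X: "1 \<le> X" "0 < X"
    using large by (auto simp: X_def)
  have "gen (powr_lyapunov \<alpha>) x \<le> X powr (\<alpha> - 1) * drift \<Gamma> lam x + (\<alpha> - 1) * X powr (\<alpha> - 2) * diffu \<Gamma> lam x
      + K * X powr (\<alpha> - 3) * real jump_size / 3 * diffu \<Gamma> lam x"
  proof (rule gen_le_taylor[where F = "\<lambda>t. (t powr \<alpha> - 1) / \<alpha>" and dF = "\<lambda>t. t powr (\<alpha> - 1)"
        and d2F = "\<lambda>t. (\<alpha> - 1) * t powr (\<alpha> - 2)" and d3F = "\<lambda>t. (\<alpha> - 1) * (\<alpha> - 2) * t powr (\<alpha> - 3)",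
        OF x, folded X_def])
    show "2 * real jump_size \<le> X"
      using large by (simp add: X_def)
    show "powr_lyapunov \<alpha> y = (real y powr \<alpha> - 1) / \<alpha>" if "X / 2 \<le> real y" for y
      using powr_minus_one_div_nonneg[of "real y" \<alpha>] that large \<alpha> by (simp add: powr_lyapunov_def X_def)
    fix t assume t: "X / 2 \<le> t" "t \<le> 2 * X"
    then have "0 < t"
      using X by simp
    show "((\<lambda>t. (t powr \<alpha> - 1) / \<alpha>) has_real_derivative t powr (\<alpha> - 1)) (at t)"
      by (rule DERIV_cong[OF DERIV_cdivide[OF DERIV_diff[OF has_real_derivative_powr[OF \<open>0 < t\<close>] DERIV_const]]])
        (use \<alpha> in simp)
    show "((\<lambda>t. t powr (\<alpha> - 1)) has_real_derivative (\<alpha> - 1) * t powr (\<alpha> - 2)) (at t)"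
      using has_real_derivative_powr[OF \<open>0 < t\<close>, of "\<alpha> - 1"] by (simp add: algebra_simps)
    show "((\<lambda>t. (\<alpha> - 1) * t powr (\<alpha> - 2)) has_real_derivative (\<alpha> - 1) * (\<alpha> - 2) * t powr (\<alpha> - 3)) (at t)"
      using DERIV_cmult[OF has_real_derivative_powr[OF \<open>0 < t\<close>, of "\<alpha> - 2"], of "\<alpha> - 1"]
      by (simp add: algebra_simps)
    have "\<bar>(\<alpha> - 1) * (\<alpha> - 2) * t powr (\<alpha> - 3)\<bar> = \<bar>(\<alpha> - 1) * (\<alpha> - 2)\<bar> * t powr (\<alpha> - 3)"
      by (simp add: abs_mult)
    also have "\<dots> \<le> \<bar>(\<alpha> - 1) * (\<alpha> - 2)\<bar> * (2 powr \<bar>\<alpha> - 3\<bar> * X powr (\<alpha> - 3))"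
      using X t by (intro mult_left_mono powr_le_on_dyadic_interval) auto
    finally show "\<bar>(\<alpha> - 1) * (\<alpha> - 2) * t powr (\<alpha> - 3)\<bar> \<le> K * X powr (\<alpha> - 3)"
      by (simp add: K_def powr_remainder_const_def mult.assoc)
  qed
  also have "\<dots> = X powr (\<alpha> - 2) * diffu \<Gamma> lam x * (Jfun \<Gamma> lam x + \<alpha> - 1 + K * real jump_size / (3 * X))"
  proof -
    have "X powr (\<alpha> - 1) = X powr (\<alpha> - 2) * X" "X powr (\<alpha> - 2) = X powr (\<alpha> - 3) * X"
      using powr_add[of X "\<alpha> - 2" 1] powr_add[of X "\<alpha> - 3" 1] X by simp_all
    moreover have "drift \<Gamma> lam x * X = Jfun \<Gamma> lam x * diffu \<Gamma> lam x"
      using v_pos x by (simp add: Jfun_def X_def less_imp_neq[symmetric])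
    ultimately show ?thesis
      using X by (simp add: field_simps)
  qed
  finally show ?thesis
    by (simp add: X_def K_def)
qed

lemma gen_lnln_lyapunov_le:
  assumes x: "x \<in> S" and large: "2 * real jump_size + 8 \<le> real x"
  shows "gen lnln_lyapunov x \<le> diffu \<Gamma> lam x / ((real x)^2 * (ln (real x))^2)
    * (ln (real x) * (Jfun \<Gamma> lam x - 1) - 1 + 112 * real jump_size * ln (real x) / (3 * real x))"
proof -
  define X where "X = real x"
  define L where "L = ln X"
  have X: "8 \<le> X" and "0 < L"
    using large by (auto simp: X_def L_def)
  have "gen lnln_lyapunov x \<le> 1 / (X * L) * drift \<Gamma> lam x + - (L + 1) / (X^2 * L^2) * diffu \<Gamma> lam x
      + 112 / (X^3 * L) * real jump_size / 3 * diffu \<Gamma> lam x"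
  proof (rule gen_le_taylor[where F = "\<lambda>t. ln (ln t)" and dF = "\<lambda>t. 1 / (t * ln t)"
        and d2F = "\<lambda>t. - (ln t + 1) / (t^2 * (ln t)^2)"
        and d3F = "\<lambda>t. (2 * (ln t)^2 + 3 * ln t + 2) / (t^3 * (ln t)^3)", OF x, folded X_def L_def])
    show "2 * real jump_size \<le> X"
      using large by (simp add: X_def)
    show "lnln_lyapunov y = ln (ln (real y))" if "X / 2 \<le> real y" for y
      using that X by (simp add: lnln_lyapunov_def)
    fix t assume t: "X / 2 \<le> t" "t \<le> 2 * X"
    then have "0 < t" "0 < ln t"
      using X by auto
    then show "((\<lambda>t. ln (ln t)) has_real_derivative 1 / (t * ln t)) (at t)"
      and "((\<lambda>t. 1 / (t * ln t)) has_real_derivative - (ln t + 1) / (t^2 * (ln t)^2)) (at t)"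
      and "((\<lambda>t. - (ln t + 1) / (t^2 * (ln t)^2)) has_real_derivative
          (2 * (ln t)^2 + 3 * ln t + 2) / (t^3 * (ln t)^3)) (at t)"
      by (auto intro!: derivative_eq_intros simp: field_simps power2_eq_square power3_eq_cube)
    show "\<bar>(2 * (ln t)^2 + 3 * ln t + 2) / (t^3 * (ln t)^3)\<bar> \<le> 112 / (X^3 * L)"
      unfolding L_def by (rule lnln_third_derivative_bound[OF X t])
  qed
  also have "\<dots> = diffu \<Gamma> lam x / (X^2 * L^2)
      * (L * (Jfun \<Gamma> lam x - 1) - 1 + 112 * real jump_size * L / (3 * X))"
  proof -
    have "drift \<Gamma> lam x = Jfun \<Gamma> lam x * diffu \<Gamma> lam x / X"
      using v_pos x X by (simp add: Jfun_def X_def less_imp_neq[symmetric])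
    then show ?thesis
      using X \<open>0 < L\<close> by (simp add: field_simps power2_eq_square power3_eq_cube)
  qed
  finally show ?thesis
    by (simp add: X_def L_def)
qed

end

section \<open>Drift of the Lyapunov functions under the hypotheses\<close>

lemma exists_nonzero_between:
  fixes a b :: real
  assumes "a < b"
  obtains x where "a < x" "x < b" "x \<noteq> 0"
proof (cases "a + b = 0")
  case True
  with assms show ?thesis
    by (intro that[of "b / 2"]) auto
next
  case False
  with assms show ?thesis
    by (intro that[of "(a + b) / 2"]) auto
qed

lemma eventually_real_ge_in:
  "eventually (\<lambda>x. a \<le> real x) (inf sequentially (principal (S :: nat set)))"
proof (rule filter_leD[OF inf_le1])
  have "a \<le> real x" if "nat \<lceil>a\<rceil> \<le> x" for x
  proof -
    from that have "real (nat \<lceil>a\<rceil>) \<le> real x"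
      by simp
    then show ?thesis
      using real_nat_ceiling_ge[of a] by linarith
  qed
  then show "eventually (\<lambda>x. a \<le> real x) sequentially"
    using eventually_ge_at_top[of "nat \<lceil>a\<rceil>"] by (auto elim: eventually_mono)
qed

lemma eventually_mem_in: "eventually (\<lambda>x. x \<in> S) (inf F (principal S))"
  by (simp add: eventually_inf_principal)

lemma eventually_less_if_Limsup_less:
  assumes "Limsup F (\<lambda>x. ereal (f x)) < ereal a"
  obtains b where "b < a" "eventually (\<lambda>x. f x < b) F"
proof -
  obtain b where "Limsup F (\<lambda>x. ereal (f x)) < ereal b" "b < a"
    using ereal_dense2[OF assms] by auto
  with Limsup_lessD[of F "\<lambda>x. ereal (f x)" "ereal b"] that show ?thesis
    by simp
qed

lemma H1fun_eq: "diffu \<Gamma> lam x \<noteq> 0 \<Longrightarrow> H1fun \<Gamma> lam x = ln (real x) * (Jfun \<Gamma> lam x - 1)"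
  by (simp add: H1fun_def Jfun_def field_simps)

context jump_chain
begin

lemma gen_powr_lyapunov_neg:
  assumes \<alpha>: "\<alpha> \<noteq> 0" "2 - c \<le> \<alpha>" and C0: "0 < C0" and \<delta>: "0 < \<delta>"
    and x: "x \<in> S" and v: "real x powr c \<le> C0 * diffu \<Gamma> lam x" and J: "Jfun \<Gamma> lam x + \<alpha> - 1 \<le> - \<delta>"
    and large: "2 * real jump_size + 2 \<le> real x"
      "2 * powr_remainder_const \<alpha> * real jump_size / (3 * \<delta>) \<le> real x"
  shows "gen (powr_lyapunov \<alpha>) x \<le> - (\<delta> / (2 * C0))"
proof -
  define X where "X = real x"
  define K where "K = powr_remainder_const \<alpha> * real jump_size"
  have X: "1 \<le> X"
    using large by (simp add: X_def)
  have KX: "K / (3 * X) \<le> \<delta> / 2"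
    using large(2) \<delta> X by (simp add: X_def K_def field_simps)
  have "0 < diffu \<Gamma> lam x"
    using v_pos x by simp
  have "1 \<le> X powr (\<alpha> - 2 + c)"
    using X \<alpha> by (simp add: ge_one_powr_ge_zero)
  also have "\<dots> = X powr (\<alpha> - 2) * X powr c"
    by (simp add: powr_add)
  also have "\<dots> \<le> X powr (\<alpha> - 2) * (C0 * diffu \<Gamma> lam x)"
    using v by (intro mult_left_mono) (auto simp: X_def)
  finally have lower: "1 / C0 \<le> X powr (\<alpha> - 2) * diffu \<Gamma> lam x"
    using C0 by (simp add: field_simps)
  have "gen (powr_lyapunov \<alpha>) x \<le> X powr (\<alpha> - 2) * diffu \<Gamma> lam x * (Jfun \<Gamma> lam x + \<alpha> - 1 + K / (3 * X))"
    using gen_powr_lyapunov_le[OF \<alpha>(1) x large(1)] by (simp add: X_def K_def mult.assoc)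
  also have "\<dots> \<le> X powr (\<alpha> - 2) * diffu \<Gamma> lam x * (- \<delta> / 2)"
    using J KX \<open>0 < diffu \<Gamma> lam x\<close> by (intro mult_left_mono) auto
  also have "\<dots> \<le> 1 / C0 * (- \<delta> / 2)"
    using lower \<delta> by (intro mult_right_mono_neg) auto
  finally show ?thesis
    by simp
qed

lemma powr_lyapunov_drift:
  assumes C0: "0 < C0" and Js: "Js < c - 1"
    and ev: "eventually (\<lambda>x. real x powr c \<le> C0 * diffu \<Gamma> lam x \<and> Jfun \<Gamma> lam x < Js)
      (inf sequentially (principal S))"
  obtains V where "\<And>y. 0 \<le> V y" "eventually (\<lambda>x. gen V x \<le> -1) (inf sequentially (principal S))"
proof -
  obtain \<alpha> where \<alpha>: "2 - c < \<alpha>" "\<alpha> < 1 - Js" "\<alpha> \<noteq> 0"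
    using exists_nonzero_between[of "2 - c" "1 - Js"] Js by auto
  define \<delta> where "\<delta> = 1 - Js - \<alpha>"
  have \<delta>: "0 < \<delta>"
    using \<alpha> by (simp add: \<delta>_def)
  define V where "V y = 2 * C0 / \<delta> * powr_lyapunov \<alpha> y" for y
  have "0 \<le> V y" for y
    using C0 \<delta> by (simp add: V_def powr_lyapunov_nonneg)
  moreover have "eventually (\<lambda>x. gen V x \<le> -1) (inf sequentially (principal S))"
    using ev eventually_mem_in eventually_real_ge_in[of "2 * real jump_size + 2"]
      eventually_real_ge_in[of "2 * powr_remainder_const \<alpha> * real jump_size / (3 * \<delta>)"]
  proof eventually_elim
    case (elim x)
    then have "gen (powr_lyapunov \<alpha>) x \<le> - (\<delta> / (2 * C0))"
      using \<alpha> C0 \<delta> by (intro gen_powr_lyapunov_neg) (auto simp: \<delta>_def)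
    then have "2 * C0 / \<delta> * gen (powr_lyapunov \<alpha>) x \<le> 2 * C0 / \<delta> * - (\<delta> / (2 * C0))"
      using C0 \<delta> by (intro mult_left_mono) auto
    moreover have "gen V x = 2 * C0 / \<delta> * gen (powr_lyapunov \<alpha>) x"
      unfolding V_def by (rule gen_cmult)
    ultimately show ?case
      using C0 \<delta> by simp
  qed
  ultimately show ?thesis
    using that by blast
qed

lemma lnln_lyapunov_drift:
  assumes h: "h < 1"
    and ev: "eventually (\<lambda>x. ln (real x) * (Jfun \<Gamma> lam x - 1) < h) (inf sequentially (principal S))"
  shows "eventually (\<lambda>x. gen lnln_lyapunov x \<le> 0) (inf sequentially (principal S))"
proof -
  define G where "G = real jump_size"
  have "(\<lambda>x. 112 * G / 3 * (ln (real x) / real x)) \<longlonglongrightarrow> 112 * G / 3 * 0"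
    by (intro tendsto_mult tendsto_const lim_ln_over_n)
  then have "eventually (\<lambda>x. 112 * G / 3 * (ln (real x) / real x) < 1 - h) sequentially"
    using h by (intro order_tendstoD(2)) auto
  then have small: "eventually (\<lambda>x. 112 * G / 3 * (ln (real x) / real x) < 1 - h) (inf sequentially (principal S))"
    by (rule filter_leD[OF inf_le1])
  show ?thesis
    using ev small eventually_mem_in eventually_real_ge_in[of "2 * G + 8"]
  proof eventually_elim
    case (elim x)
    have "112 * G * ln (real x) / (3 * real x) = 112 * G / 3 * (ln (real x) / real x)"
      by simp
    with elim have "ln (real x) * (Jfun \<Gamma> lam x - 1) - 1 + 112 * G * ln (real x) / (3 * real x) \<le> 0"
      by linarith
    moreover have "0 \<le> diffu \<Gamma> lam x / ((real x)^2 * (ln (real x))^2)"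
      using v_pos elim by (intro divide_nonneg_nonneg) (auto simp: less_imp_le)
    ultimately have "diffu \<Gamma> lam x / ((real x)^2 * (ln (real x))^2)
        * (ln (real x) * (Jfun \<Gamma> lam x - 1) - 1 + 112 * G * ln (real x) / (3 * real x)) \<le> 0"
      by (rule mult_nonneg_nonpos[rotated])
    with gen_lnln_lyapunov_le[of x] elim show ?case
      by (simp add: G_def)
  qed
qed

lemma drift_bounds_if_Limsup_J:
  assumes c: "c \<le> 2" and v: "gtrsim S (diffu \<Gamma> lam) (\<lambda>x. real x powr c)"
    and J: "Limsup (inf sequentially (principal S)) (\<lambda>x. ereal (Jfun \<Gamma> lam x)) < ereal (c - 1)"
  obtains C0 Js h where "0 < C0" "Js < c - 1" "h < 1"
    "eventually (\<lambda>x. real x powr c \<le> C0 * diffu \<Gamma> lam x \<and> Jfun \<Gamma> lam x < Js)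
      (inf sequentially (principal S))"
    "eventually (\<lambda>x. ln (real x) * (Jfun \<Gamma> lam x - 1) < h) (inf sequentially (principal S))"
proof -
  obtain C0 where "0 < C0"
    and v: "eventually (\<lambda>x. real x powr c \<le> C0 * diffu \<Gamma> lam x) (inf sequentially (principal S))"
    using v unfolding gtrsim_def by blast
  obtain Js where "Js < c - 1" and J: "eventually (\<lambda>x. Jfun \<Gamma> lam x < Js) (inf sequentially (principal S))"
    using J by (rule eventually_less_if_Limsup_less)
  have "eventually (\<lambda>x. ln (real x) * (Jfun \<Gamma> lam x - 1) < 0) (inf sequentially (principal S))"
    using J eventually_real_ge_in[of 2]
  proof eventually_elim
    case (elim x)
    then show ?case
      using \<open>Js < c - 1\<close> c by (intro mult_pos_neg) auto
  qed
  with eventually_conj[OF v J] \<open>0 < C0\<close> \<open>Js < c - 1\<close> show thesis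
    by (intro that[of C0 Js 0]) auto
qed

lemma drift_bounds_if_Limsup_H1:
  assumes c: "2 < c" and v: "gtrsim S (diffu \<Gamma> lam) (\<lambda>x. real x powr c)"
    and H1: "Limsup (inf sequentially (principal S)) (\<lambda>x. ereal (H1fun \<Gamma> lam x)) < 1"
  obtains C0 Js h where "0 < C0" "Js < c - 1" "h < 1"
    "eventually (\<lambda>x. real x powr c \<le> C0 * diffu \<Gamma> lam x \<and> Jfun \<Gamma> lam x < Js)
      (inf sequentially (principal S))"
    "eventually (\<lambda>x. ln (real x) * (Jfun \<Gamma> lam x - 1) < h) (inf sequentially (principal S))"
proof -
  obtain C0 where "0 < C0"
    and v: "eventually (\<lambda>x. real x powr c \<le> C0 * diffu \<Gamma> lam x) (inf sequentially (principal S))"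
    using v unfolding gtrsim_def by blast
  obtain h where "h < 1" and H1: "eventually (\<lambda>x. H1fun \<Gamma> lam x < h) (inf sequentially (principal S))"
    using H1 unfolding one_ereal_def by (rule eventually_less_if_Limsup_less)
  have lnJ: "eventually (\<lambda>x. ln (real x) * (Jfun \<Gamma> lam x - 1) < h) (inf sequentially (principal S))"
    using H1 eventually_mem_in
    by eventually_elim (use v_pos in \<open>simp add: H1fun_eq less_imp_neq[symmetric]\<close>)
  text \<open>Once ln x \<ge> 2 / (c - 2), the bound on H1 forces J x < c / 2 < c - 1.\<close>
  have "eventually (\<lambda>x. Jfun \<Gamma> lam x < c / 2) (inf sequentially (principal S))"
    using lnJ eventually_real_ge_in[of "exp (2 / (c - 2))"]
  proof eventually_elim
    case (elim x)
    moreover from elim have "0 < real x"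
      using exp_gt_zero[of "2 / (c - 2)"] by linarith
    ultimately have "2 / (c - 2) \<le> ln (real x)"
      using ln_ge_iff[of "real x" "2 / (c - 2)"] by simp
    show ?case
    proof (rule ccontr)
      assume "\<not> Jfun \<Gamma> lam x < c / 2"
      then have "1 \<le> 2 / (c - 2) * (Jfun \<Gamma> lam x - 1)"
        using c by (simp add: field_simps)
      also have "\<dots> \<le> ln (real x) * (Jfun \<Gamma> lam x - 1)"
        using \<open>2 / (c - 2) \<le> ln (real x)\<close> \<open>\<not> Jfun \<Gamma> lam x < c / 2\<close> c by (intro mult_right_mono) auto
      finally show False
        using elim \<open>h < 1\<close> by linarith
    qed
  qed
  with eventually_conj[OF v] lnJ \<open>0 < C0\<close> \<open>h < 1\<close> c show thesis
    by (intro that[of C0 "c / 2" h]) auto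
qed

lemma drift_hypotheses:
  assumes cases:
    "(\<exists>c::real. c \<le> 2 \<and> gtrsim S (diffu \<Gamma> lam) (\<lambda>x. real x powr c) \<and>
        Limsup (inf sequentially (principal S)) (\<lambda>x. ereal (Jfun \<Gamma> lam x)) < ereal (c - 1))
     \<or> (\<exists>c::real. c > 2 \<and> gtrsim S (diffu \<Gamma> lam) (\<lambda>x. real x powr c) \<and>
        Limsup (inf sequentially (principal S)) (\<lambda>x. ereal (H1fun \<Gamma> lam x)) < 1)"
  obtains c C0 Js h where "0 < C0" "Js < c - 1" "h < 1"
    "eventually (\<lambda>x. real x powr c \<le> C0 * diffu \<Gamma> lam x \<and> Jfun \<Gamma> lam x < Js)
      (inf sequentially (principal S))"
    "eventually (\<lambda>x. ln (real x) * (Jfun \<Gamma> lam x - 1) < h) (inf sequentially (principal S))"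
  using cases
proof (elim disjE exE conjE)
  fix c :: real
  assume "c \<le> 2" "gtrsim S (diffu \<Gamma> lam) (\<lambda>x. real x powr c)"
    "Limsup (inf sequentially (principal S)) (\<lambda>x. ereal (Jfun \<Gamma> lam x)) < ereal (c - 1)"
  from drift_bounds_if_Limsup_J[OF this] obtain C0 Js h where "0 < C0" "Js < c - 1" "h < 1"
    "eventually (\<lambda>x. real x powr c \<le> C0 * diffu \<Gamma> lam x \<and> Jfun \<Gamma> lam x < Js)
      (inf sequentially (principal S))"
    "eventually (\<lambda>x. ln (real x) * (Jfun \<Gamma> lam x - 1) < h) (inf sequentially (principal S))" .
  then show thesis
    by (rule that)
next
  fix c :: real
  assume "2 < c" "gtrsim S (diffu \<Gamma> lam) (\<lambda>x. real x powr c)"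
    "Limsup (inf sequentially (principal S)) (\<lambda>x. ereal (H1fun \<Gamma> lam x)) < 1"
  from drift_bounds_if_Limsup_H1[OF this] obtain C0 Js h where "0 < C0" "Js < c - 1" "h < 1"
    "eventually (\<lambda>x. real x powr c \<le> C0 * diffu \<Gamma> lam x \<and> Jfun \<Gamma> lam x < Js)
      (inf sequentially (principal S))"
    "eventually (\<lambda>x. ln (real x) * (Jfun \<Gamma> lam x - 1) < h) (inf sequentially (principal S))" .
  then show thesis
    by (rule that)
qed

end

theorem mainTheorem10:
  fixes S :: "nat set" and \<Gamma> :: "int set" and lam :: "int \<Rightarrow> nat \<Rightarrow> real"
  assumes S_inf: "infinite S"
    and irred: "irreducible S lam"
    and Gamma_fin: "finite \<Gamma>"
    and Gamma_supp: "\<forall>x\<in>S. \<forall>\<eta>. \<eta> \<notin> \<Gamma> \<longrightarrow> lam \<eta> x = 0"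
    and rates_nonneg: "\<forall>x\<in>S. \<forall>\<eta>. 0 \<le> lam \<eta> x"
    and rates_in_S: "\<forall>x\<in>S. \<forall>\<eta>. int x + \<eta> \<notin> int ` S \<longrightarrow> lam \<eta> x = 0"
    and v_pos: "\<forall>x\<in>S. diffu \<Gamma> lam x > 0"
    and cases:
      "(\<exists>c::real. c \<le> 2 \<and> gtrsim S (diffu \<Gamma> lam) (\<lambda>x. real x powr c) \<and>
           Limsup (inf sequentially (principal S)) (\<lambda>x. ereal (Jfun \<Gamma> lam x)) < ereal (c - 1))
       \<or> (\<exists>c::real. c > 2 \<and> gtrsim S (diffu \<Gamma> lam) (\<lambda>x. real x powr c) \<and>
           Limsup (inf sequentially (principal S)) (\<lambda>x. ereal (H1fun \<Gamma> lam x)) < 1)"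
  shows "positive_recurrent S \<Gamma> lam"
proof -
  interpret jump_chain S \<Gamma> lam
    using Gamma_fin Gamma_supp rates_nonneg rates_in_S v_pos irred by unfold_locales
  from drift_hypotheses[OF cases] obtain c C0 Js h where C0: "0 < C0" and Js: "Js < c - 1" and h: "h < 1"
    and ev_J: "eventually (\<lambda>x. real x powr c \<le> C0 * diffu \<Gamma> lam x \<and> Jfun \<Gamma> lam x < Js)
      (inf sequentially (principal S))"
    and ev_H1: "eventually (\<lambda>x. ln (real x) * (Jfun \<Gamma> lam x - 1) < h) (inf sequentially (principal S))" .
  obtain V where V: "\<And>y. 0 \<le> V y" "eventually (\<lambda>x. gen V x \<le> -1) (inf sequentially (principal S))"
    using powr_lyapunov_drift[OF C0 Js ev_J] by blast
  have "finite {x \<in> S. lnln_lyapunov x \<le> M}" for M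
    by (rule finite_subset[OF _ finite_lnln_lyapunov_sublevel[of M]]) auto
  then show ?thesis
    by (rule positive_recurrent_if_drift[OF V lnln_lyapunov_nonneg _ lnln_lyapunov_drift[OF h ev_H1]])
qed

end
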